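(* In the setting below, for every $S\subseteq\{1,\dots,n\}$ and every $t>0$, $$\mathbb{P}\Big(\max_{i\in S^c}\|A_S^*Ae_i\|_2\ge\sqrt{\Theta/m}+t\Big)\le n\exp\!\left(-\frac{mt^2/2}{\Theta\,(1+4\sqrt{\Theta/m}+2t/3)}\right),$$ where $\Theta=\Theta(S,F)$, provided $\Theta(S,F)\ge\Lambda(S,F)$ for some admissible $\Lambda(S,F)$.
   Context: Setting: Let $n,m\ge 1$. For $\ell=1,\dots,m$ let $F_\ell$ be a probability distribution on $\mathbb{C}^{p_\ell\times n}$, $F=(F_\ell)$, $B_1,\dots,B_m$ independent with $B_\ell\sim F_\ell$, $A=\frac{1}{\sqrt m}(B_1;\dots;B_m)$ (stacked vertically), and isotropy $\frac1m\sum_{\ell=1}^m\mathbb{E}(B_\ell^*B_\ell)=\mathrm{Id}_n$. $P_Sx=x_S$, $M_S:=MP_S^*$, $B_{\ell,S}=B_\ell P_S^*$; $e_i$ the canonical basis; $S^c$ the complement of $S$. $\|M\|_{\infty\to\infty}$ is the maximal $\ell^1$ norm of a row. $\Theta(S,F)$ is a positive real with $\|B_\ell^*B_{\ell,S}\|_{\infty\to\infty}\le\Theta(S,F)$ a.s. for all $\ell$; $\Lambda(S,F)$ is a positive real with $\|B_{\ell,S}^*B_{\ell,S}\|_{2\to2}\le\Lambda(S,F)$ a.s. for all $\ell$. *)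

theory Defs
  imports "HOL-Probability.Probability"
begin

text \<open>Matrices are represented as functions on index pairs (row, column), with
  rows and columns indexed from 0. A matrix B in C^(p x n) is a function
  nat \<times> nat \<Rightarrow> complex, with relevant entries for row < p, column < n.\<close>

text \<open>The measurable space of p x n complex matrices (entries outside the index
  set are undefined, as in PiM).\<close>
definition cmat_space :: "nat \<Rightarrow> nat \<Rightarrow> (nat \<times> nat \<Rightarrow> complex) measure" where
  "cmat_space p n = PiM ({..<p} \<times> {..<n}) (\<lambda>_. borel)"

definition gram :: "nat \<Rightarrow> (nat \<times> nat \<Rightarrow> complex) \<Rightarrow> nat \<Rightarrow> nat \<Rightarrow> complex" where
  "gram p B j j' = (\<Sum>k<p. cnj (B (k, j)) * B (k, j'))"

definition norm_inf_inf :: "nat set \<Rightarrow> nat set \<Rightarrow> (nat \<Rightarrow> nat \<Rightarrow> complex) \<Rightarrow> real" where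
  "norm_inf_inf I J G = Max (insert 0 ((\<lambda>i. \<Sum>j\<in>J. cmod (G i j)) ` I))"

definition norm_2_2 :: "nat set \<Rightarrow> nat set \<Rightarrow> (nat \<Rightarrow> nat \<Rightarrow> complex) \<Rightarrow> real" where
  "norm_2_2 I J G = Sup {sqrt (\<Sum>i\<in>I. (cmod (\<Sum>j\<in>J. G i j * x j))\<^sup>2) | x.
                          (\<Sum>j\<in>J. (cmod (x j))\<^sup>2) \<le> 1}"

text \<open>The stacked matrix A = (1/sqrt m) (B_1; ...; B_m); its rows are indexed by pairs
  (l, k) with l < m and k < p l (row k of block l).\<close>
definition stackA :: "nat \<Rightarrow> (nat \<Rightarrow> nat \<times> nat \<Rightarrow> complex) \<Rightarrow> (nat \<times> nat) \<Rightarrow> nat \<Rightarrow> complex" where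
  "stackA m Bs = (\<lambda>(l, k) j. Bs l (k, j) / complex_of_real (sqrt (real m)))"

definition stack_rows :: "nat \<Rightarrow> (nat \<Rightarrow> nat) \<Rightarrow> (nat \<times> nat) set" where
  "stack_rows m p = Sigma {..<m} (\<lambda>l. {..<p l})"

text \<open>The vector A_S^* A e_i, with entries indexed by s in S.\<close>
definition ASAe :: "nat \<Rightarrow> (nat \<Rightarrow> nat) \<Rightarrow> (nat \<Rightarrow> nat \<times> nat \<Rightarrow> complex) \<Rightarrow> nat \<Rightarrow> nat \<Rightarrow> complex" where
  "ASAe m p Bs i s = (\<Sum>r\<in>stack_rows m p. cnj (stackA m Bs r s) * stackA m Bs r i)"

definition vnorm2 :: "nat set \<Rightarrow> (nat \<Rightarrow> complex) \<Rightarrow> real" where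
  "vnorm2 S x = sqrt (\<Sum>s\<in>S. (cmod (x s))\<^sup>2)"

end

(*
  Fix a column i outside S and let W_l be the restriction to S of the i-th column of B_l^* B_l,
  centred.  Since i \<notin> S, isotropy makes the means cancel, so m A_S^* A e_i = \<Sum>_l W_l.  The W_l
  are independent and centred; \<parallel>W_l\<parallel> \<le> 2\<Theta> because the Gram matrix is Hermitian and \<Theta> bounds
  the row sums of B_l^* B_{l,S}; and \<Sum>_l E \<parallel>W_l\<parallel>^2 \<le> \<Lambda> \<Sum>_l E \<parallel>B_l e_i\<parallel>^2 = \<Lambda> m \<le> \<Theta> m.
  Pinelis' inequality cosh \<parallel>v + w\<parallel> \<le> cosh \<parallel>v\<parallel> + (linear in w) + cosh \<parallel>v\<parallel> (e^\<parallel>w\<parallel> - 1 - \<parallel>w\<parallel>)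
  lets one integrate out the W_l one at a time, which gives the Bernstein moment bound
  E cosh (\<lambda> \<parallel>\<Sum>_l W_l\<parallel>) \<le> exp (\<lambda>^2 m \<Theta> / (2 (1 - 2\<lambda>\<Theta>/3))).  Markov's inequality with
  \<lambda> = t / (\<Theta> (1 + 4 sqrt (\<Theta>/m) + 2t/3)), together with Chebyshev for small deviations, bounds
  the tail of each column, and a union bound over the columns outside S finishes.
*)

theory Submission
  imports Defs
begin

section \<open>Elementary inequalities for exp, ln and cosh\<close>

lemma DERIV_nonneg_imp_le_from_0:
  fixes f f' :: "real \<Rightarrow> real"
  assumes "\<And>x. 0 \<le> x \<Longrightarrow> (f has_real_derivative f' x) (at x)"
    and "\<And>x. 0 \<le> x \<Longrightarrow> 0 \<le> f' x" and "0 \<le> y"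
  shows "f 0 \<le> f y"
proof (rule DERIV_nonneg_imp_increasing_open[OF \<open>0 \<le> y\<close>])
  show "\<And>x. 0 < x \<Longrightarrow> x < y \<Longrightarrow> \<exists>z. (f has_real_derivative z) (at x) \<and> 0 \<le> z"
    using assms(1,2) by (meson less_imp_le)
  show "continuous_on {0..y} f"
    by (rule continuous_at_imp_continuous_on) (use assms(1) in \<open>meson DERIV_isCont atLeastAtMost_iff\<close>)
qed

lemma sinh_ge_self: "0 \<le> x \<Longrightarrow> x \<le> sinh (x::real)"
  using real_le_x_sinh by (simp add: sinh_def exp_minus)

lemma exp_remainder_le_Bernstein:
  assumes "0 \<le> (y::real)" "y < 3"
  shows "exp y - 1 - y \<le> y\<^sup>2 / (2 * (1 - y/3))"
proof -
  define j' where "j' = (\<lambda>y::real. 1 - exp y + y * exp y)"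
  define j where "j = (\<lambda>y::real. y + 2 - 2 * exp y + y * exp y)"
  define k where "k = (\<lambda>y::real. y\<^sup>2 - 2 * (1 - y/3) * (exp y - 1 - y))"
  have j'_nonneg: "0 \<le> j' x" if "0 \<le> x" for x
  proof -
    have "j' 0 \<le> j' x"
      by (rule DERIV_nonneg_imp_le_from_0[where f'="\<lambda>x. x * exp x"])
         (auto intro!: derivative_eq_intros simp: j'_def that algebra_simps)
    then show ?thesis by (simp add: j'_def)
  qed
  have j_nonneg: "0 \<le> j x" if "0 \<le> x" for x
  proof -
    have "(j has_real_derivative j' x) (at x)" for x
      unfolding j_def j'_def by (rule derivative_eq_intros refl)+ (simp add: algebra_simps)
    with DERIV_nonneg_imp_le_from_0[where f=j and f'=j', OF _ j'_nonneg that] show ?thesis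
      by (simp add: j_def)
  qed
  have "k 0 \<le> k y"
  proof (rule DERIV_nonneg_imp_le_from_0[where f'="\<lambda>x. 2/3 * j x", OF _ _ assms(1)])
    show "(k has_real_derivative 2/3 * j x) (at x)" for x
      unfolding k_def j_def by (auto intro!: derivative_eq_intros simp: field_simps power2_eq_square)
  qed (use j_nonneg in auto)
  then show ?thesis
    using assms by (simp add: k_def field_simps)
qed

lemma Pade_le_ln_add_one:
  assumes "0 \<le> (u::real)"
  shows "2*u/(2+u) \<le> ln (1+u)"
proof -
  have "(\<lambda>u. ln (1+u) - 2*u/(2+u)) 0 \<le> (\<lambda>u. ln (1+u) - 2*u/(2+u)) u"
  proof (rule DERIV_nonneg_imp_le_from_0[where f'="\<lambda>u. 1/(1+u) - 4/(2+u)^2"])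
    fix x :: real assume x: "0 \<le> x"
    show "((\<lambda>u. ln (1+u) - 2*u/(2+u)) has_real_derivative 1/(1+x) - 4/(2+x)^2) (at x)"
      using x by (auto intro!: derivative_eq_intros simp: field_simps power2_eq_square)
    have "4*(1+x) \<le> (2+x)^2" by (simp add: power2_eq_square algebra_simps)
    then show "0 \<le> 1/(1+x) - 4/(2+x)^2" using x by (simp add: field_simps)
  qed (use assms in auto)
  then show ?thesis by simp
qed

lemma quarter_square_le_ln_add_one:
  assumes "0 \<le> (u::real)" "u \<le> 2"
  shows "u\<^sup>2/4 \<le> ln (1+u)"
proof -
  have "u * (u * (2+u)) \<le> u * 8"
    using assms mult_mono[of u 2 "2+u" 4] by (intro mult_left_mono) auto
  then have "u\<^sup>2/4 \<le> 2*u/(2+u)"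
    using assms by (simp add: field_simps power2_eq_square)
  with Pade_le_ln_add_one[OF assms(1)] show ?thesis by linarith
qed

lemma convex_on_power_nonneg: "convex_on {0::real..} (\<lambda>x. x^k)"
proof (cases "even k")
  case True
  then show ?thesis by (rule convex_on_subset[OF convex_power_even]) auto
qed (simp add: convex_power_odd)

lemma cosh_sqrt_sums:
  assumes "0 \<le> (y::real)"
  shows "(\<lambda>n. if even n then y^(n div 2) / fact n else 0) sums cosh (sqrt y)"
proof -
  have "sqrt y ^ n /\<^sub>R fact n = y^(n div 2) / fact n" if "even n" for n
  proof -
    from that obtain k where "n = 2*k" by blast
    then have "sqrt y ^ n = y ^ (n div 2)"
      using assms by (simp add: power_mult real_sqrt_pow2)
    then show ?thesis by (simp add: divide_inverse_commute)
  qed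
  then have "(\<lambda>n. if even n then sqrt y ^ n /\<^sub>R fact n else 0) =
             (\<lambda>n. if even n then y^(n div 2) / fact n else 0)"
    by auto
  with cosh_converges[of "sqrt y"] show ?thesis by simp
qed

text \<open>The power series of \<open>cosh (sqrt y)\<close> has nonnegative coefficients and only powers of \<open>y\<close>,
  so convexity of each power gives convexity of \<open>cosh \<circ> sqrt\<close>.\<close>
lemma cosh_sqrt_convex:
  fixes y1 y2 t :: real
  assumes "0 \<le> y1" "0 \<le> y2" "0 \<le> t" "t \<le> 1"
  shows "cosh (sqrt ((1-t)*y1 + t*y2)) \<le> (1-t)*cosh (sqrt y1) + t*cosh (sqrt y2)"
proof -
  define g where "g = (\<lambda>y::real. \<lambda>n::nat. if even n then y^(n div 2) / fact n else 0)"
  have y: "0 \<le> (1-t)*y1 + t*y2" using assms by simp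
  have le: "g ((1-t)*y1 + t*y2) n \<le> (1-t) * g y1 n + t * g y2 n" for n
  proof (cases "even n")
    case True
    have "((1-t)*y1 + t*y2)^(n div 2) / fact n \<le> ((1-t)*y1^(n div 2) + t*y2^(n div 2)) / fact n"
      using convex_onD[OF convex_on_power_nonneg, of t y1 y2 "n div 2"] assms
      by (intro divide_right_mono) auto
    then show ?thesis using True by (simp add: g_def add_divide_distrib)
  qed (simp add: g_def)
  have combination: "(\<lambda>n. (1-t) * g y1 n + t * g y2 n) sums ((1-t)*cosh (sqrt y1) + t*cosh (sqrt y2))"
    using cosh_sqrt_sums[OF assms(1)] cosh_sqrt_sums[OF assms(2)]
    by (intro sums_add sums_mult) (simp_all add: g_def)
  show ?thesis
    using sums_le[OF le _ combination] cosh_sqrt_sums[OF y] by (simp add: g_def)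
qed

lemma cosh_mult_cosh_add_sinh_mult_sinh_le:
  fixes r q d :: real
  assumes "0 \<le> r" "0 \<le> q" "\<bar>d\<bar> \<le> 1"
  shows "cosh r * cosh q + d * sinh r * sinh q \<le> cosh r + d * q * sinh r + cosh r * (exp q - 1 - q)"
proof -
  have "d * sinh r \<le> 1 * sinh r"
    using assms by (intro mult_right_mono) auto
  then have "0 \<le> (sinh q - q) * (cosh r - d * sinh r)"
    using sinh_ge_self[OF assms(2)] sinh_le_cosh_real[of r] by (intro mult_nonneg_nonneg) auto
  moreover have "cosh r + d * q * sinh r + cosh r * (exp q - 1 - q) - (cosh r * cosh q + d * sinh r * sinh q)
      = (sinh q - q) * (cosh r - d * sinh r)"
    by (simp add: cosh_plus_sinh[symmetric] algebra_simps)
  ultimately show ?thesis by linarith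
qed

text \<open>Pinelis' scalar inequality: write \<open>r\<^sup>2 + 2 r c + q\<^sup>2\<close> as a convex combination of
  \<open>(r - q)\<^sup>2\<close> and \<open>(r + q)\<^sup>2\<close> and use convexity of \<open>cosh \<circ> sqrt\<close>.\<close>
lemma cosh_sqrt_Pinelis:
  fixes r q c :: real
  assumes "0 \<le> r" "0 \<le> q" "\<bar>c\<bar> \<le> q"
  shows "cosh (sqrt (r\<^sup>2 + 2*r*c + q\<^sup>2)) \<le> cosh r + c * sinh r + cosh r * (exp q - 1 - q)"
proof (cases "q = 0")
  case True
  then show ?thesis using assms by simp
next
  case False
  define d where "d = c / q"
  define t where "t = (1 + d) / 2"
  have c: "c = d * q" and d: "\<bar>d\<bar> \<le> 1"
    using False assms by (auto simp: d_def abs_divide divide_le_eq_1)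
  then have t: "0 \<le> t" "t \<le> 1" by (auto simp: t_def)
  have d_t: "d = 2*t - 1"
    by (simp add: t_def field_simps)
  have convex_combination: "r\<^sup>2 + 2*r*c + q\<^sup>2 = (1-t)*(r-q)\<^sup>2 + t*(r+q)\<^sup>2"
    unfolding c d_t by (simp add: power2_eq_square algebra_simps)
  have "cosh (sqrt (r\<^sup>2 + 2*r*c + q\<^sup>2)) \<le> (1-t)*cosh (sqrt ((r-q)\<^sup>2)) + t*cosh (sqrt ((r+q)\<^sup>2))"
    unfolding convex_combination by (rule cosh_sqrt_convex[OF _ _ t]) simp_all
  also have "\<dots> = cosh r * cosh q + (2*t - 1) * sinh r * sinh q"
    by (simp add: cosh_add cosh_diff algebra_simps)
  also have "\<dots> \<le> cosh r + c * sinh r + cosh r * (exp q - 1 - q)"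
    using cosh_mult_cosh_add_sinh_mult_sinh_le[OF assms(1,2) d] by (simp add: c d_t mult_ac)
  finally show ?thesis .
qed

section \<open>Arithmetic of the tail exponent\<close>

lemma ln_two_le_Bernstein_slack:
  fixes a u :: real
  assumes a: "0 < a" and u: "0 < u"
    and c_def: "c = 1 + 4*a + 2*a*u/3"
    and large: "2 * ln (1+u) < u\<^sup>2 / (2*c)"
  shows "ln 2 \<le> u\<^sup>2 / (2*c) * (4*a / (1 + 4*a)) + u / c"
proof -
  have "0 \<le> 2*a*u/3" using a u by simp
  then have c: "1 \<le> c" using a by (simp add: c_def)
  have u_gt_2: "2 < u"
  proof (rule ccontr)
    assume "\<not> 2 < u"
    then have "u\<^sup>2/4 \<le> ln (1+u)" using u by (intro quarter_square_le_ln_add_one) auto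
    moreover have "u\<^sup>2/(2*c) \<le> u\<^sup>2/2" using c by (intro divide_left_mono) auto
    ultimately show False using large by simp
  qed
  have slack_nonneg: "0 \<le> u\<^sup>2 / (2*c) * (4*a / (1 + 4*a))" "0 \<le> u / c"
    using a u c by simp_all
  show ?thesis
  proof (cases "1/8 \<le> a")
    case True
    have "3 * ln 2 = ln ((2::real)^3)" by (simp only: ln_realpow)
    also have "\<dots> \<le> ln ((3::real)^2)" by simp
    also have "\<dots> = 2 * ln 3" by (simp only: ln_realpow)
    also have "\<dots> \<le> 2 * ln (1+u)" using u_gt_2 by simp
    finally have "ln 2 \<le> u\<^sup>2 / (2*c) * (1/3)" using large by simp
    also have "\<dots> \<le> u\<^sup>2 / (2*c) * (4*a / (1 + 4*a))"
      using True c by (intro mult_left_mono) (auto simp: field_simps)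
    finally show ?thesis using slack_nonneg by linarith
  next
    case False
    have "2*a*u/3 \<le> u / 12" using False u by (simp add: field_simps)
    then have "c \<le> u" using False u_gt_2 unfolding c_def by linarith
    then have "1 \<le> u / c" using c by simp
    then show ?thesis using ln_2_less_1 slack_nonneg by linarith
  qed
qed

lemma Bernstein_exponent_eq:
  fixes m a u c :: real
  assumes m: "0 < m" and a: "0 < a" and c: "0 < c" and c_def: "c = 1 + 4*a + 2*a*u/3"
  defines "lam \<equiv> u / (m * a * c)"
  shows "lam\<^sup>2 * (m * (m * a\<^sup>2)) / (2 * (1 - lam * (2 * (m * a\<^sup>2)) / 3)) - lam * (m * (a + a * u))
    = u\<^sup>2 / (2*c) / (1 + 4*a) - 2 * (u\<^sup>2 / (2*c)) - u / c"
proof -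
  have variance_term: "lam\<^sup>2 * (m * (m * a\<^sup>2)) = u\<^sup>2 / c\<^sup>2"
    using a m c by (simp add: lam_def power2_eq_square field_simps)
  have "lam * (2 * (m * a\<^sup>2)) / 3 = (2*a*u/3) / c"
    using a m c by (simp add: lam_def power2_eq_square field_simps)
  moreover have "c - 2*a*u/3 = 1 + 4*a"
    by (simp add: c_def)
  ultimately have range_term: "1 - lam * (2 * (m * a\<^sup>2)) / 3 = (1 + 4*a) / c"
    using c by (simp add: diff_divide_distrib[symmetric] field_simps)
  have deviation_term: "lam * (m * (a + a * u)) = u / c + 2 * (u\<^sup>2 / (2*c))"
    using a m c by (simp add: lam_def power2_eq_square field_simps)
  have "x / c\<^sup>2 / (2 * (k / c)) = x / (2*c) / k" if "0 < k" for x k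
    using that c by (simp add: power2_eq_square field_simps)
  from this[of "1 + 4*a" "u\<^sup>2"] a show ?thesis
    unfolding variance_term range_term deviation_term by linarith
qed

text \<open>With \<open>u = t / a\<close> the Chebyshev bound is \<open>(1 + u)\<^sup>-\<^sup>2 = exp (- 2 ln (1 + u))\<close>; when the
  target exponent is larger, \<open>u > 2\<close> and the slack in the Bernstein exponent absorbs the
  factor \<open>2\<close>.\<close>
lemma Bernstein_Chebyshev_tail_le:
  fixes \<Theta> m t P :: real
  assumes \<Theta>_pos: "0 < \<Theta>" and m_pos: "0 < m" and t_pos: "0 < t"
  defines "a \<equiv> sqrt (\<Theta> / m)"
  defines "D \<equiv> \<Theta> * (1 + 4 * a + 2 * t / 3)"
  defines "lam \<equiv> t / D"
  assumes Chebyshev: "P \<le> m * \<Theta> / (m * (a + t))\<^sup>2"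
    and Bernstein: "P \<le> 2 * exp (lam\<^sup>2 * (m * \<Theta>) / (2 * (1 - lam * (2 * \<Theta>) / 3)) - lam * (m * (a + t)))"
  shows "P \<le> exp (- ((m * t\<^sup>2 / 2) / D))"
proof -
  define u where "u = t / a"
  define c where "c = 1 + 4*a + 2*a*u/3"
  have a: "0 < a" using \<Theta>_pos m_pos by (simp add: a_def)
  have \<Theta>: "\<Theta> = m * a\<^sup>2" using \<Theta>_pos m_pos by (simp add: a_def)
  have t: "t = a * u" and u: "0 < u" using a t_pos by (simp_all add: u_def)
  have c: "0 < c" using a u by (simp add: c_def add_pos_nonneg)
  have D: "D = m * a\<^sup>2 * c" by (simp add: D_def c_def \<Theta> t algebra_simps)
  have exponent: "(m * t\<^sup>2 / 2) / D = u\<^sup>2 / (2*c)"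
    using a m_pos c by (simp add: D t power2_eq_square field_simps)
  show ?thesis
  proof (cases "u\<^sup>2/(2*c) \<le> 2 * ln (1+u)")
    case True
    have "exp (2 * ln (1+u)) = (1+u)\<^sup>2"
      using u by (subst ln_realpow[of "1+u" 2, simplified, symmetric]) simp
    have "m * (a + t) = (m * a) * (1 + u)" and "m * \<Theta> = (m * a)\<^sup>2"
      by (simp_all add: t \<Theta> power2_eq_square algebra_simps)
    then have "m * \<Theta> / (m * (a + t))\<^sup>2 = 1 / (1 + u)\<^sup>2"
      using a m_pos by (simp add: power_mult_distrib)
    also have "\<dots> = exp (- (2 * ln (1+u)))"
      using \<open>exp (2 * ln (1+u)) = (1+u)\<^sup>2\<close> by (simp add: exp_minus divide_inverse)
    also have "\<dots> \<le> exp (- ((m * t\<^sup>2 / 2) / D))"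
      unfolding exponent using True by simp
    finally show ?thesis using Chebyshev by linarith
  next
    case False
    have "lam = u / (m * a * c)"
      using a m_pos c by (simp add: lam_def D t power2_eq_square field_simps)
    then have Y: "lam\<^sup>2 * (m * \<Theta>) / (2 * (1 - lam * (2 * \<Theta>) / 3)) - lam * (m * (a + t))
        = u\<^sup>2 / (2*c) / (1 + 4*a) - 2 * (u\<^sup>2 / (2*c)) - u / c"
      unfolding \<Theta> t by (simp only: Bernstein_exponent_eq[OF m_pos a c c_def])
    have "x / (1 + 4*a) = x - x * (4*a / (1 + 4*a))" for x
      using a by (simp add: field_simps)
    from this[of "u\<^sup>2 / (2*c)"] ln_two_le_Bernstein_slack[OF a u c_def] False
    have "ln 2 + (u\<^sup>2 / (2*c) / (1 + 4*a) - 2 * (u\<^sup>2 / (2*c)) - u / c) \<le> - (u\<^sup>2 / (2*c))"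
      by linarith
    then have "exp (ln 2 + (u\<^sup>2 / (2*c) / (1 + 4*a) - 2 * (u\<^sup>2 / (2*c)) - u / c)) \<le> exp (- (u\<^sup>2 / (2*c)))"
      by simp
    then show ?thesis
      using Bernstein unfolding Y exponent by (simp add: exp_add)
  qed
qed

section \<open>Euclidean norm on the coordinates in S\<close>

definition re_inner :: "nat set \<Rightarrow> (nat \<Rightarrow> complex) \<Rightarrow> (nat \<Rightarrow> complex) \<Rightarrow> real" where
  "re_inner S v w = (\<Sum>s\<in>S. Re (cnj (v s) * w s))"

lemma vnorm2_nonneg: "0 \<le> vnorm2 S v"
  by (simp add: vnorm2_def sum_nonneg)

lemma vnorm2_power2: "(vnorm2 S v)\<^sup>2 = (\<Sum>s\<in>S. (cmod (v s))\<^sup>2)"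
  by (simp add: vnorm2_def sum_nonneg)

lemma vnorm2_eq_L2_set: "vnorm2 S v = L2_set (\<lambda>s. cmod (v s)) S"
  by (simp add: vnorm2_def L2_set_def)

lemma vnorm2_cong: "(\<And>s. s \<in> S \<Longrightarrow> v s = w s) \<Longrightarrow> vnorm2 S v = vnorm2 S w"
  by (simp add: vnorm2_def)

lemma vnorm2_mult: "vnorm2 S (\<lambda>s. c * v s) = cmod c * vnorm2 S v"
  by (simp add: vnorm2_def norm_mult power_mult_distrib sum_distrib_left[symmetric] real_sqrt_mult)

lemma vnorm2_uminus: "vnorm2 S (\<lambda>s. - v s) = vnorm2 S v"
  by (simp add: vnorm2_def)

lemma vnorm2_le_sum_cmod: "vnorm2 S v \<le> (\<Sum>s\<in>S. cmod (v s))"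
  unfolding vnorm2_eq_L2_set by (rule L2_set_le_sum) simp

lemma vnorm2_add_power2:
  "(vnorm2 S (\<lambda>s. v s + w s))\<^sup>2 = (vnorm2 S v)\<^sup>2 + 2 * re_inner S v w + (vnorm2 S w)\<^sup>2"
proof -
  have "(cmod (a + b))\<^sup>2 = (cmod a)\<^sup>2 + 2 * Re (cnj a * b) + (cmod b)\<^sup>2" for a b
    by (simp only: cmod_power2) (simp add: power2_eq_square algebra_simps)
  then show ?thesis
    by (simp add: vnorm2_power2 re_inner_def sum.distrib sum_distrib_left)
qed

lemma abs_re_inner_le: "\<bar>re_inner S v w\<bar> \<le> vnorm2 S v * vnorm2 S w"
proof -
  have "\<bar>re_inner S v w\<bar> \<le> (\<Sum>s\<in>S. \<bar>Re (cnj (v s) * w s)\<bar>)"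
    unfolding re_inner_def by (rule sum_abs)
  also have "\<dots> \<le> (\<Sum>s\<in>S. \<bar>cmod (v s)\<bar> * \<bar>cmod (w s)\<bar>)"
    by (intro sum_mono) (metis abs_Re_le_cmod abs_norm_cancel complex_mod_cnj norm_mult)
  also have "\<dots> \<le> vnorm2 S v * vnorm2 S w"
    unfolding vnorm2_eq_L2_set by (rule L2_set_mult_ineq)
  finally show ?thesis .
qed

lemma vnorm2_triangle: "vnorm2 S (\<lambda>s. v s + w s) \<le> vnorm2 S v + vnorm2 S w"
proof -
  have "(vnorm2 S (\<lambda>s. v s + w s))\<^sup>2 \<le> (vnorm2 S v + vnorm2 S w)\<^sup>2"
    unfolding vnorm2_add_power2 using abs_re_inner_le[of S v w]
    by (simp add: power2_eq_square algebra_simps)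
  then show ?thesis
    using vnorm2_nonneg[of S v] vnorm2_nonneg[of S w] by (simp add: power2_le_iff_abs_le)
qed

lemma re_inner_self: "re_inner S v v = (vnorm2 S v)\<^sup>2"
proof -
  have "Re (cnj z * z) = (cmod z)\<^sup>2" for z
    by (simp add: mult.commute[of "cnj z"] complex_norm_square[symmetric])
  then show ?thesis
    by (simp add: re_inner_def vnorm2_power2)
qed

lemma re_inner_uminus_right: "re_inner S v (\<lambda>s. - w s) = - re_inner S v w"
  unfolding re_inner_def by (subst sum_negf[symmetric]) (rule sum.cong; simp)

lemma re_inner_le: "re_inner S v w \<le> vnorm2 S v * vnorm2 S w"
  using abs_re_inner_le[of S v w] by linarith

lemma re_inner_adjoint:
  "re_inner S x (\<lambda>s. \<Sum>k<p. cnj (A (k, s)) * u k) = re_inner {..<p} (\<lambda>k. \<Sum>s\<in>S. A (k, s) * x s) u"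
proof -
  have "(\<Sum>s\<in>S. cnj (x s) * (\<Sum>k<p. cnj (A (k, s)) * u k))
      = (\<Sum>s\<in>S. \<Sum>k<p. cnj (x s) * (cnj (A (k, s)) * u k))"
    by (simp add: sum_distrib_left)
  also have "\<dots> = (\<Sum>k<p. \<Sum>s\<in>S. cnj (x s) * (cnj (A (k, s)) * u k))"
    by (rule sum.swap)
  also have "\<dots> = (\<Sum>k<p. cnj (\<Sum>s\<in>S. A (k, s) * x s) * u k)"
    by (simp add: cnj_sum sum_distrib_left sum_distrib_right mult_ac)
  finally show ?thesis
    unfolding re_inner_def Re_sum[symmetric] by (rule arg_cong)
qed

lemma borel_measurable_vnorm2_on:
  assumes "\<And>s. s \<in> S \<Longrightarrow> (\<lambda>y. W y s) \<in> borel_measurable N"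
  shows "(\<lambda>y. vnorm2 S (W y)) \<in> borel_measurable N"
proof -
  have "(\<lambda>y. \<Sum>s\<in>S. (cmod (W y s))\<^sup>2) \<in> borel_measurable N"
    using assms by (intro borel_measurable_sum) measurable
  then show ?thesis
    unfolding vnorm2_def by measurable
qed

lemma borel_measurable_vnorm2 [measurable]:
  "(\<And>s. (\<lambda>y. W y s) \<in> borel_measurable N) \<Longrightarrow> (\<lambda>y. vnorm2 S (W y)) \<in> borel_measurable N"
  by (rule borel_measurable_vnorm2_on)

lemma borel_measurable_vnorm2_PiM_sum:
  fixes W :: "nat \<Rightarrow> 'b \<Rightarrow> nat \<Rightarrow> complex"
  assumes "\<And>l s. (\<lambda>y. W l y s) \<in> borel_measurable (N l)" and "J \<subseteq> I"
  shows "(\<lambda>x. vnorm2 S (\<lambda>s. \<Sum>l\<in>J. W l (x l) s)) \<in> borel_measurable (PiM I N)"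
proof (intro borel_measurable_vnorm2 borel_measurable_sum)
  fix l s assume "l \<in> J"
  with assms show "(\<lambda>x. W l (x l) s) \<in> borel_measurable (PiM I N)"
    by (intro measurable_compose[OF measurable_component_singleton]) auto
qed

lemma borel_measurable_cosh_real [measurable]:
  assumes [measurable]: "f \<in> borel_measurable M"
  shows "(\<lambda>x. cosh (f x :: real)) \<in> borel_measurable M"
  unfolding cosh_def by measurable

text \<open>Pinelis' inequality for the Euclidean norm: only the inner product \<open>re_inner S v w\<close>
  enters linearly, so it averages out when \<open>w\<close> is centred.\<close>
lemma cosh_vnorm2_add_le:
  fixes S :: "nat set" and v w :: "nat \<Rightarrow> complex" and lam :: real
  assumes lam: "0 \<le> lam"
  defines "r \<equiv> vnorm2 S v" and "q \<equiv> vnorm2 S w"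
  shows "cosh (lam * vnorm2 S (\<lambda>s. v s + w s)) \<le>
           cosh (lam * r) + (if r = 0 then 0 else lam * sinh (lam * r) / r) * re_inner S v w
           + cosh (lam * r) * (exp (lam * q) - 1 - lam * q)"
proof -
  define c where "c = (if r = 0 then 0 else re_inner S v w / r)"
  have r: "0 \<le> r" and q: "0 \<le> q"
    by (simp_all add: r_def q_def vnorm2_nonneg)
  have CS: "\<bar>re_inner S v w\<bar> \<le> r * q"
    using abs_re_inner_le[of S v w] by (simp add: r_def q_def)
  then have rc: "r * c = re_inner S v w"
    by (auto simp: c_def)
  have cq: "\<bar>c\<bar> \<le> q"
    using CS q r by (cases "r = 0") (auto simp: c_def abs_divide divide_le_eq mult.commute)
  have "(lam*r)\<^sup>2 + 2*(lam*r)*(lam*c) + (lam*q)\<^sup>2 = (lam * vnorm2 S (\<lambda>s. v s + w s))\<^sup>2"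
    unfolding power_mult_distrib vnorm2_add_power2 r_def[symmetric] q_def[symmetric] rc[symmetric]
    by (simp add: power2_eq_square algebra_simps)
  then have "sqrt ((lam*r)\<^sup>2 + 2*(lam*r)*(lam*c) + (lam*q)\<^sup>2) = lam * vnorm2 S (\<lambda>s. v s + w s)"
    using lam vnorm2_nonneg[of S "\<lambda>s. v s + w s"] by simp
  then have "cosh (lam * vnorm2 S (\<lambda>s. v s + w s))
      \<le> cosh (lam*r) + (lam*c) * sinh (lam*r) + cosh (lam*r) * (exp (lam*q) - 1 - lam*q)"
    using cosh_sqrt_Pinelis[of "lam*r" "lam*q" "lam*c"] lam r q cq
    by (simp add: abs_mult mult_left_mono)
  also have "(lam*c) * sinh (lam*r) = (if r = 0 then 0 else lam * sinh (lam * r) / r) * re_inner S v w"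
    by (simp add: c_def)
  finally show ?thesis .
qed

lemma cosh_vnorm2_add_le_quadratic:
  assumes lam: "0 \<le> lam" and w: "vnorm2 S w \<le> b" and lam_b: "lam * b < 3"
  shows "cosh (lam * vnorm2 S (\<lambda>s. v s + w s)) \<le>
           cosh (lam * vnorm2 S v)
           + (if vnorm2 S v = 0 then 0 else lam * sinh (lam * vnorm2 S v) / vnorm2 S v) * re_inner S v w
           + cosh (lam * vnorm2 S v) * (lam\<^sup>2 / (2 * (1 - lam * b / 3))) * (vnorm2 S w)\<^sup>2"
proof -
  define q where "q = vnorm2 S w"
  have q: "0 \<le> q" "lam * q \<le> lam * b"
    using w lam by (auto simp: q_def vnorm2_nonneg intro: mult_left_mono)
  have "exp (lam * q) - 1 - lam * q \<le> (lam * q)\<^sup>2 / (2 * (1 - lam * q / 3))"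
    using q lam lam_b by (intro exp_remainder_le_Bernstein) auto
  also have "\<dots> \<le> (lam * q)\<^sup>2 / (2 * (1 - lam * b / 3))"
    using q lam lam_b by (intro divide_left_mono) (auto simp: mult.commute intro!: mult_pos_pos)
  finally have "exp (lam * q) - 1 - lam * q \<le> (lam\<^sup>2 / (2 * (1 - lam * b / 3))) * q\<^sup>2"
    by (simp add: power_mult_distrib)
  then have "cosh (lam * vnorm2 S v) * (exp (lam * q) - 1 - lam * q)
      \<le> cosh (lam * vnorm2 S v) * ((lam\<^sup>2 / (2 * (1 - lam * b / 3))) * q\<^sup>2)"
    by (rule mult_left_mono) simp
  then show ?thesis
    using cosh_vnorm2_add_le[OF lam, of S v w] by (simp add: q_def mult.assoc)
qed

section \<open>A Bernstein inequality for sums of independent bounded vectors\<close>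

text \<open>Independence is encoded by the product measure; integrating out the last coordinate
  reduces a bound for \<open>k + 1\<close> summands to the bound for \<open>k\<close>.\<close>
lemma nn_integral_PiM_vnorm2_sum_le:
  fixes N :: "nat \<Rightarrow> 'b measure" and W :: "nat \<Rightarrow> 'b \<Rightarrow> nat \<Rightarrow> complex"
    and g :: "real \<Rightarrow> real" and F \<alpha> \<beta> :: "nat \<Rightarrow> ennreal"
  assumes N: "\<And>l. prob_space (N l)"
    and W: "\<And>l s. (\<lambda>y. W l y s) \<in> borel_measurable (N l)"
    and g [measurable]: "g \<in> borel_measurable borel"
    and step: "\<And>l v. l < k \<Longrightarrow> (\<integral>\<^sup>+ y. ennreal (g (vnorm2 S (\<lambda>s. v s + W l y s))) \<partial>N l)
                           \<le> \<alpha> l * ennreal (g (vnorm2 S v)) + \<beta> l"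
    and F0: "ennreal (g 0) \<le> F 0"
    and F_Suc: "\<And>l. l < k \<Longrightarrow> \<alpha> l * F l + \<beta> l \<le> F (Suc l)"
  shows "(\<integral>\<^sup>+ x. ennreal (g (vnorm2 S (\<lambda>s. \<Sum>l<k. W l (x l) s))) \<partial>PiM {..<k} N) \<le> F k"
  using step F_Suc
proof (induction k)
  case 0
  interpret P: prob_space "PiM {..<0::nat} N" by (rule prob_space_PiM) (rule N)
  have "vnorm2 S (\<lambda>s. 0) = 0" by (simp add: vnorm2_def)
  then show ?case using F0 P.emeasure_space_1 by simp
next
  case (Suc k)
  interpret product_sigma_finite N
    by (rule product_sigma_finite.intro) (rule prob_space_imp_sigma_finite[OF N])
  interpret P: prob_space "PiM {..<k} N" by (rule prob_space_PiM) (rule N)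
  define T where "T = (\<lambda>x s. \<Sum>l<k. W l (x l) s)"
  have [measurable]: "(\<lambda>x. vnorm2 S (T x)) \<in> borel_measurable (PiM {..<k} N)"
    unfolding T_def by (rule borel_measurable_vnorm2_PiM_sum[OF W]) simp
  have "(\<lambda>x. vnorm2 S (\<lambda>s. \<Sum>l<Suc k. W l (x l) s)) \<in> borel_measurable (PiM (insert k {..<k}) N)"
    by (rule borel_measurable_vnorm2_PiM_sum[OF W]) auto
  then have "(\<lambda>x. ennreal (g (vnorm2 S (\<lambda>s. \<Sum>l<Suc k. W l (x l) s))))
      \<in> borel_measurable (PiM (insert k {..<k}) N)"
    by measurable
  from product_nn_integral_insert[OF _ _ this]
  have "(\<integral>\<^sup>+ x. ennreal (g (vnorm2 S (\<lambda>s. \<Sum>l<Suc k. W l (x l) s))) \<partial>PiM {..<Suc k} N)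
      = (\<integral>\<^sup>+ x. (\<integral>\<^sup>+ y. ennreal (g (vnorm2 S (\<lambda>s. \<Sum>l<Suc k. W l ((x(k := y)) l) s))) \<partial>N k) \<partial>PiM {..<k} N)"
    by (simp add: lessThan_Suc)
  also have "\<dots> = (\<integral>\<^sup>+ x. (\<integral>\<^sup>+ y. ennreal (g (vnorm2 S (\<lambda>s. T x s + W k y s))) \<partial>N k) \<partial>PiM {..<k} N)"
    by (simp add: T_def lessThan_Suc add.commute)
  also have "\<dots> \<le> (\<integral>\<^sup>+ x. \<alpha> k * ennreal (g (vnorm2 S (T x))) + \<beta> k \<partial>PiM {..<k} N)"
    by (intro nn_integral_mono Suc.prems(1)) auto
  also have "\<dots> = \<alpha> k * (\<integral>\<^sup>+ x. ennreal (g (vnorm2 S (T x))) \<partial>PiM {..<k} N) + \<beta> k"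
    by (subst nn_integral_add) (auto simp: nn_integral_cmult P.emeasure_space_1)
  also have "\<dots> \<le> \<alpha> k * F k + \<beta> k"
    using Suc.IH[OF Suc.prems(1) Suc.prems(2)] by (auto simp: T_def intro: mult_left_mono add_right_mono)
  also have "\<dots> \<le> F (Suc k)"
    using Suc.prems(2) by simp
  finally show ?case .
qed

locale centred_bounded_vectors =
  fixes N :: "nat \<Rightarrow> 'b measure" and W :: "nat \<Rightarrow> 'b \<Rightarrow> nat \<Rightarrow> complex"
    and S :: "nat set" and m :: nat and b :: real
  assumes prob_space_N: "\<And>l. prob_space (N l)"
    and finite_S: "finite S"
    and measurable_W [measurable]: "\<And>l s. (\<lambda>y. W l y s) \<in> borel_measurable (N l)"
    and integrable_W: "\<And>l s. l < m \<Longrightarrow> s \<in> S \<Longrightarrow> integrable (N l) (\<lambda>y. W l y s)"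
    and centred_W: "\<And>l s. l < m \<Longrightarrow> s \<in> S \<Longrightarrow> integral\<^sup>L (N l) (\<lambda>y. W l y s) = 0"
    and bounded_W: "\<And>l. l < m \<Longrightarrow> AE y in N l. vnorm2 S (W l y) \<le> b"
begin

lemma integrable_vnorm2_power2: "l < m \<Longrightarrow> integrable (N l) (\<lambda>y. (vnorm2 S (W l y))\<^sup>2)"
proof -
  assume l: "l < m"
  interpret prob_space "N l" by (rule prob_space_N)
  show ?thesis
  proof (rule integrable_const_bound[where B="b\<^sup>2"])
    show "AE y in N l. norm ((vnorm2 S (W l y))\<^sup>2) \<le> b\<^sup>2"
      using bounded_W[OF l] by eventually_elim (simp add: vnorm2_nonneg power_mono)
  qed measurable
qed

lemma integrable_re_inner: "l < m \<Longrightarrow> integrable (N l) (\<lambda>y. re_inner S v (W l y))"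
  unfolding re_inner_def using integrable_W
  by (intro Bochner_Integration.integrable_sum integrable_Re integrable_mult_right) auto

lemma integral_re_inner: "l < m \<Longrightarrow> integral\<^sup>L (N l) (\<lambda>y. re_inner S v (W l y)) = 0"
proof -
  assume l: "l < m"
  have "integral\<^sup>L (N l) (\<lambda>y. re_inner S v (W l y))
      = (\<Sum>s\<in>S. Re (integral\<^sup>L (N l) (\<lambda>y. cnj (v s) * W l y s)))"
    unfolding re_inner_def using integrable_W[OF l]
    by (subst Bochner_Integration.integral_sum) (auto intro!: sum.cong integral_Re integrable_mult_right)
  also have "\<dots> = 0"
    using centred_W[OF l] by simp
  finally show ?thesis .
qed

lemma integrable_cosh_vnorm2_add:
  assumes l: "l < m" and b: "0 \<le> b" and lam: "0 \<le> lam"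
  shows "integrable (N l) (\<lambda>y. cosh (lam * vnorm2 S (\<lambda>s. v s + W l y s)))"
proof -
  interpret prob_space "N l" by (rule prob_space_N)
  have "AE y in N l. norm (cosh (lam * vnorm2 S (\<lambda>s. v s + W l y s))) \<le> cosh (lam * (vnorm2 S v + b))"
    using bounded_W[OF l]
  proof eventually_elim
    case (elim y)
    then have "lam * vnorm2 S (\<lambda>s. v s + W l y s) \<le> lam * (vnorm2 S v + b)"
      using vnorm2_triangle[of S v "W l y"] lam by (intro mult_left_mono) auto
    then show ?case
      using lam b vnorm2_nonneg[of S v] vnorm2_nonneg[of S "\<lambda>s. v s + W l y s"]
      by (simp add: cosh_real_nonneg_le_iff)
  qed
  then show ?thesis
    by (rule integrable_const_bound) measurable
qed

lemma nn_integral_cosh_vnorm2_add_le: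
  assumes l: "l < m" and b: "0 \<le> b" and lam: "0 \<le> lam" "lam * b < 3"
  shows "(\<integral>\<^sup>+ y. ennreal (cosh (lam * vnorm2 S (\<lambda>s. v s + W l y s))) \<partial>N l)
          \<le> ennreal (cosh (lam * vnorm2 S v) *
                exp (lam\<^sup>2 * (\<integral>y. (vnorm2 S (W l y))\<^sup>2 \<partial>N l) / (2*(1 - lam*b/3))))"
proof -
  interpret prob_space "N l" by (rule prob_space_N)
  define r where "r = vnorm2 S v"
  define K where "K = (if r = 0 then 0 else lam * sinh (lam * r) / r)"
  define C where "C = cosh (lam * r)"
  define D where "D = 2*(1 - lam*b/3)"
  define E where "E = (\<integral>y. (vnorm2 S (W l y))\<^sup>2 \<partial>N l)"
  define h where "h = (\<lambda>y. C + K * re_inner S v (W l y) + C * (lam\<^sup>2 / D) * (vnorm2 S (W l y))\<^sup>2)"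
  have C: "0 \<le> C" by (simp add: C_def)
  have int_cosh: "integrable (N l) (\<lambda>y. cosh (lam * vnorm2 S (\<lambda>s. v s + W l y s)))"
    by (rule integrable_cosh_vnorm2_add[OF l b lam(1)])
  have int_h: "integrable (N l) h"
    unfolding h_def using integrable_re_inner[OF l] integrable_vnorm2_power2[OF l]
    by (intro Bochner_Integration.integrable_add integrable_mult_right) auto
  have "integral\<^sup>L (N l) h = C + K * 0 + C * (lam\<^sup>2 / D) * E"
    unfolding h_def E_def using integrable_re_inner[OF l] integrable_vnorm2_power2[OF l]
    by (subst Bochner_Integration.integral_add,
        (auto intro!: Bochner_Integration.integrable_add integrable_mult_right)[2])+
       (simp add: integral_re_inner[OF l] prob_space)
  then have "integral\<^sup>L (N l) h = C * (1 + lam\<^sup>2 * E / D)"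
    by (simp add: algebra_simps)
  moreover have "AE y in N l. cosh (lam * vnorm2 S (\<lambda>s. v s + W l y s)) \<le> h y"
    using bounded_W[OF l]
  proof eventually_elim
    case (elim y)
    show ?case
      unfolding h_def C_def K_def D_def r_def by (rule cosh_vnorm2_add_le_quadratic[OF lam(1) elim lam(2)])
  qed
  ultimately have "integral\<^sup>L (N l) (\<lambda>y. cosh (lam * vnorm2 S (\<lambda>s. v s + W l y s))) \<le> C * (1 + lam\<^sup>2 * E / D)"
    using integral_mono_AE[OF int_cosh int_h] by simp
  also have "\<dots> \<le> C * exp (lam\<^sup>2 * E / D)"
    using C by (intro mult_left_mono) auto
  finally show ?thesis
    by (subst nn_integral_eq_integral[OF int_cosh]) (auto simp: C_def r_def E_def D_def intro!: ennreal_leI)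
qed

lemma nn_integral_vnorm2_add_power2:
  assumes l: "l < m"
  shows "(\<integral>\<^sup>+ y. ennreal ((vnorm2 S (\<lambda>s. v s + W l y s))\<^sup>2) \<partial>N l)
          = ennreal ((vnorm2 S v)\<^sup>2 + (\<integral>y. (vnorm2 S (W l y))\<^sup>2 \<partial>N l))"
proof -
  interpret prob_space "N l" by (rule prob_space_N)
  have int: "integrable (N l) (\<lambda>y. (vnorm2 S v)\<^sup>2 + 2 * re_inner S v (W l y) + (vnorm2 S (W l y))\<^sup>2)"
    using integrable_re_inner[OF l] integrable_vnorm2_power2[OF l]
    by (intro Bochner_Integration.integrable_add integrable_mult_right) auto
  have "(\<integral>\<^sup>+ y. ennreal ((vnorm2 S (\<lambda>s. v s + W l y s))\<^sup>2) \<partial>N l)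
      = ennreal (\<integral>y. (vnorm2 S v)\<^sup>2 + 2 * re_inner S v (W l y) + (vnorm2 S (W l y))\<^sup>2 \<partial>N l)"
    unfolding vnorm2_add_power2 by (rule nn_integral_eq_integral[OF int]) (simp add: vnorm2_add_power2[symmetric])
  also have "\<dots> = ennreal ((vnorm2 S v)\<^sup>2 + (\<integral>y. (vnorm2 S (W l y))\<^sup>2 \<partial>N l))"
    using integrable_re_inner[OF l] integrable_vnorm2_power2[OF l]
    by (subst Bochner_Integration.integral_add,
        (auto intro!: Bochner_Integration.integrable_add integrable_mult_right)[2])+
       (simp add: integral_re_inner[OF l] prob_space)
  finally show ?thesis .
qed

lemma nn_integral_cosh_vnorm2_sum_le:
  assumes b: "0 \<le> b" and lam: "0 \<le> lam" "lam * b < 3"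
  shows "(\<integral>\<^sup>+ x. ennreal (cosh (lam * vnorm2 S (\<lambda>s. \<Sum>l<m. W l (x l) s))) \<partial>PiM {..<m} N)
           \<le> ennreal (exp (lam\<^sup>2 * (\<Sum>l<m. \<integral>y. (vnorm2 S (W l y))\<^sup>2 \<partial>N l) / (2*(1 - lam*b/3))))"
proof -
  define \<sigma> where "\<sigma> = (\<lambda>l. \<integral>y. (vnorm2 S (W l y))\<^sup>2 \<partial>N l)"
  define D where "D = 2*(1 - lam*b/3)"
  have "(\<integral>\<^sup>+ x. ennreal (cosh (lam * vnorm2 S (\<lambda>s. \<Sum>l<m. W l (x l) s))) \<partial>PiM {..<m} N)
           \<le> ennreal (exp (lam\<^sup>2 * (\<Sum>l<m. \<sigma> l) / D))"
  proof (rule nn_integral_PiM_vnorm2_sum_le[OF prob_space_N measurable_W, where g="\<lambda>x. cosh (lam * x)"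
        and \<alpha>="\<lambda>l. ennreal (exp (lam\<^sup>2 * \<sigma> l / D))" and \<beta>="\<lambda>_. 0"
        and F="\<lambda>k. ennreal (exp (lam\<^sup>2 * (\<Sum>l<k. \<sigma> l) / D))"])
    show "(\<lambda>x. cosh (lam * x)) \<in> borel_measurable borel"
      by measurable
  next
    fix l v assume "l < m"
    then have "(\<integral>\<^sup>+ y. ennreal (cosh (lam * vnorm2 S (\<lambda>s. v s + W l y s))) \<partial>N l)
        \<le> ennreal (cosh (lam * vnorm2 S v) * exp (lam\<^sup>2 * \<sigma> l / D))"
      unfolding \<sigma>_def D_def by (rule nn_integral_cosh_vnorm2_add_le[OF _ b lam])
    then show "(\<integral>\<^sup>+ y. ennreal (cosh (lam * vnorm2 S (\<lambda>s. v s + W l y s))) \<partial>N l)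
        \<le> ennreal (exp (lam\<^sup>2 * \<sigma> l / D)) * ennreal (cosh (lam * vnorm2 S v)) + 0"
      by (simp add: ennreal_mult' mult.commute)
  next
    show "ennreal (cosh (lam * 0)) \<le> ennreal (exp (lam\<^sup>2 * (\<Sum>l<0. \<sigma> l) / D))"
      by simp
  next
    fix l
    have "lam\<^sup>2 * \<sigma> l / D + lam\<^sup>2 * (\<Sum>l<l. \<sigma> l) / D = lam\<^sup>2 * (\<Sum>l<Suc l. \<sigma> l) / D"
      by (simp add: add_divide_distrib[symmetric] distrib_left[symmetric])
    then show "ennreal (exp (lam\<^sup>2 * \<sigma> l / D)) * ennreal (exp (lam\<^sup>2 * (\<Sum>l<l. \<sigma> l) / D)) + 0
          \<le> ennreal (exp (lam\<^sup>2 * (\<Sum>l<Suc l. \<sigma> l) / D))"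
      by (simp add: ennreal_mult'[symmetric] exp_add[symmetric])
  qed
  then show ?thesis
    by (simp add: \<sigma>_def D_def)
qed

lemma nn_integral_vnorm2_sum_power2_le:
  "(\<integral>\<^sup>+ x. ennreal ((vnorm2 S (\<lambda>s. \<Sum>l<m. W l (x l) s))\<^sup>2) \<partial>PiM {..<m} N)
     \<le> ennreal (\<Sum>l<m. \<integral>y. (vnorm2 S (W l y))\<^sup>2 \<partial>N l)"
proof -
  define \<sigma> where "\<sigma> = (\<lambda>l. \<integral>y. (vnorm2 S (W l y))\<^sup>2 \<partial>N l)"
  have \<sigma>: "0 \<le> \<sigma> l" for l
    unfolding \<sigma>_def by (rule integral_nonneg_AE) simp
  have "(\<integral>\<^sup>+ x. ennreal ((vnorm2 S (\<lambda>s. \<Sum>l<m. W l (x l) s))\<^sup>2) \<partial>PiM {..<m} N)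
     \<le> ennreal (\<Sum>l<m. \<sigma> l)"
  proof (rule nn_integral_PiM_vnorm2_sum_le[OF prob_space_N measurable_W, where g="\<lambda>x. x\<^sup>2"
        and \<alpha>="\<lambda>_. 1" and \<beta>="\<lambda>l. ennreal (\<sigma> l)" and F="\<lambda>k. ennreal (\<Sum>l<k. \<sigma> l)"])
    show "(\<lambda>x::real. x\<^sup>2) \<in> borel_measurable borel"
      by measurable
  next
    fix l v assume "l < m"
    then have "(\<integral>\<^sup>+ y. ennreal ((vnorm2 S (\<lambda>s. v s + W l y s))\<^sup>2) \<partial>N l)
        = ennreal ((vnorm2 S v)\<^sup>2 + \<sigma> l)"
      unfolding \<sigma>_def by (rule nn_integral_vnorm2_add_power2)
    also have "\<dots> = 1 * ennreal ((vnorm2 S v)\<^sup>2) + ennreal (\<sigma> l)"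
      using \<sigma> by (simp add: ennreal_plus)
    finally show "(\<integral>\<^sup>+ y. ennreal ((vnorm2 S (\<lambda>s. v s + W l y s))\<^sup>2) \<partial>N l)
        \<le> 1 * ennreal ((vnorm2 S v)\<^sup>2) + ennreal (\<sigma> l)"
      by simp
  next
    show "ennreal (0\<^sup>2) \<le> ennreal (\<Sum>l<0. \<sigma> l)"
      by simp
  next
    fix l
    have "ennreal (\<Sum>l<l. \<sigma> l) + ennreal (\<sigma> l) = ennreal ((\<Sum>l<l. \<sigma> l) + \<sigma> l)"
      by (rule ennreal_plus[symmetric]) (use \<sigma> in \<open>auto intro: sum_nonneg\<close>)
    then show "1 * ennreal (\<Sum>l<l. \<sigma> l) + ennreal (\<sigma> l) \<le> ennreal (\<Sum>l<Suc l. \<sigma> l)"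
      by simp
  qed
  then show ?thesis
    by (simp add: \<sigma>_def)
qed

end

lemma measure_ge_le_Markov_mono:
  fixes f :: "'a \<Rightarrow> real" and h :: "real \<Rightarrow> real"
  assumes "prob_space M"
    and [measurable]: "f \<in> borel_measurable M" "h \<in> borel_measurable borel"
    and h_pos: "0 < h R" and h_nonneg: "\<And>x. 0 \<le> h x" and h_mono: "\<And>x. R \<le> x \<Longrightarrow> h R \<le> h x"
    and K: "(\<integral>\<^sup>+ \<omega>. ennreal (h (f \<omega>)) \<partial>M) \<le> ennreal K" and K_nonneg: "0 \<le> K"
  shows "measure M {\<omega>\<in>space M. R \<le> f \<omega>} \<le> K / h R"
proof -
  interpret prob_space M by fact
  define c where "c = ennreal (1 / h R)"
  define u where "u = (\<lambda>\<omega>. ennreal (h (f \<omega>)))"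
  have [measurable]: "u \<in> borel_measurable M"
    unfolding u_def by measurable
  have "{\<omega>\<in>space M. R \<le> f \<omega>} \<subseteq> {\<omega>\<in>space M. 1 \<le> c * u \<omega>}"
  proof safe
    fix \<omega> assume "\<omega> \<in> space M" "R \<le> f \<omega>"
    then have "1 \<le> (1 / h R) * h (f \<omega>)"
      using h_pos h_mono by (simp add: field_simps)
    then show "1 \<le> c * u \<omega>"
      using h_pos h_nonneg by (simp add: c_def u_def ennreal_mult[symmetric] ennreal_leI)
  qed
  then have "emeasure M {\<omega>\<in>space M. R \<le> f \<omega>} \<le> emeasure M {\<omega>\<in>space M. 1 \<le> c * u \<omega>}"
    by (rule emeasure_mono) measurable
  also have "\<dots> \<le> c * (\<integral>\<^sup>+ x\<in>space M. u x \<partial>M)"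
    by (rule nn_integral_Markov_inequality) (auto simp: u_def)
  also have "(\<integral>\<^sup>+ x\<in>space M. u x \<partial>M) = (\<integral>\<^sup>+ x. u x \<partial>M)"
    by (rule nn_integral_cong) simp
  also have "c * \<dots> \<le> c * ennreal K"
    using K by (intro mult_left_mono) (auto simp: u_def)
  also have "\<dots> = ennreal (K / h R)"
    using h_pos K_nonneg by (simp add: c_def ennreal_mult[symmetric])
  finally show ?thesis
    using h_pos K_nonneg by (simp add: emeasure_eq_measure ennreal_le_iff)
qed

section \<open>Gram matrices\<close>

lemma bdd_above_norm_2_2:
  assumes "finite J"
  shows "bdd_above {sqrt (\<Sum>i\<in>I. (cmod (\<Sum>j\<in>J. G i j * x j))\<^sup>2) | x. (\<Sum>j\<in>J. (cmod (x j))\<^sup>2) \<le> 1}"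
proof (rule bdd_aboveI)
  fix e assume "e \<in> {sqrt (\<Sum>i\<in>I. (cmod (\<Sum>j\<in>J. G i j * x j))\<^sup>2) | x. (\<Sum>j\<in>J. (cmod (x j))\<^sup>2) \<le> 1}"
  then obtain x where e: "e = sqrt (\<Sum>i\<in>I. (cmod (\<Sum>j\<in>J. G i j * x j))\<^sup>2)"
    and x: "(\<Sum>j\<in>J. (cmod (x j))\<^sup>2) \<le> 1" by blast
  have x_le: "cmod (x j) \<le> 1" if "j \<in> J" for j
  proof -
    have "(cmod (x j))\<^sup>2 \<le> 1\<^sup>2"
      using member_le_sum[of j J "\<lambda>j. (cmod (x j))\<^sup>2"] assms that x by simp
    then show ?thesis by (rule power2_le_imp_le) simp
  qed
  have "e = L2_set (\<lambda>i. cmod (\<Sum>j\<in>J. G i j * x j)) I"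
    by (simp add: e L2_set_def)
  also have "\<dots> \<le> (\<Sum>i\<in>I. cmod (\<Sum>j\<in>J. G i j * x j))"
    by (rule L2_set_le_sum) simp
  also have "\<dots> \<le> (\<Sum>i\<in>I. \<Sum>j\<in>J. cmod (G i j))"
    using x_le by (intro sum_mono order_trans[OF norm_sum]) (auto simp: norm_mult intro!: sum_mono mult_left_le)
  finally show "e \<le> (\<Sum>i\<in>I. \<Sum>j\<in>J. cmod (G i j))" .
qed

lemma vnorm2_mult_le_norm_2_2:
  assumes J: "finite J"
  shows "vnorm2 I (\<lambda>i. \<Sum>j\<in>J. G i j * y j) \<le> norm_2_2 I J G * vnorm2 J y"
proof (cases "vnorm2 J y = 0")
  case True
  then have "\<forall>j\<in>J. y j = 0"
    using J by (simp add: vnorm2_def sum_nonneg_eq_0_iff)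
  then show ?thesis
    using True by (simp add: vnorm2_def)
next
  case False
  define c where "c = vnorm2 J y"
  have c: "0 < c"
    using False vnorm2_nonneg[of J y] by (simp add: c_def)
  define x where "x j = complex_of_real (1/c) * y j" for j
  have cmod_c: "cmod (complex_of_real (1/c)) = 1/c"
    using c by (simp only: norm_of_real) simp
  have "(\<Sum>j\<in>J. (cmod (x j))\<^sup>2) = (vnorm2 J (\<lambda>j. complex_of_real (1/c) * y j))\<^sup>2"
    by (simp add: x_def vnorm2_power2)
  also have "\<dots> = 1"
    using c by (simp only: vnorm2_mult cmod_c) (simp add: c_def)
  finally have "vnorm2 I (\<lambda>i. \<Sum>j\<in>J. G i j * x j) \<le> norm_2_2 I J G"
    unfolding norm_2_2_def vnorm2_def by (intro cSup_upper bdd_above_norm_2_2 J) auto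
  moreover have "(\<lambda>i. \<Sum>j\<in>J. G i j * x j) = (\<lambda>i. complex_of_real (1/c) * (\<Sum>j\<in>J. G i j * y j))"
    by (simp add: x_def sum_distrib_left mult.left_commute)
  ultimately have "(1/c) * vnorm2 I (\<lambda>i. \<Sum>j\<in>J. G i j * y j) \<le> norm_2_2 I J G"
    by (simp only: vnorm2_mult cmod_c)
  then show ?thesis
    using c by (simp add: c_def field_simps)
qed

lemma gram_cnj: "gram p A j i = cnj (gram p A i j)"
  by (simp add: gram_def cnj_sum mult.commute)

lemma gram_diag: "gram p A i i = complex_of_real (\<Sum>k<p. (cmod (A (k, i)))\<^sup>2)"
  by (simp add: gram_def mult.commute[of "cnj _"] complex_norm_square[symmetric])

lemma vnorm2_mult_power2_le_norm_2_2_gram: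
  fixes A :: "nat \<times> nat \<Rightarrow> complex"
  assumes S: "finite S"
  shows "(vnorm2 {..<p} (\<lambda>k. \<Sum>s\<in>S. A (k, s) * y s))\<^sup>2 \<le> norm_2_2 S S (gram p A) * (vnorm2 S y)\<^sup>2"
proof -
  define z where "z = (\<lambda>k. \<Sum>s\<in>S. A (k, s) * y s)"
  have gram_y: "(\<lambda>s. \<Sum>k<p. cnj (A (k, s)) * z k) = (\<lambda>s. \<Sum>s'\<in>S. gram p A s s' * y s')"
  proof
    fix s
    have "(\<Sum>k<p. cnj (A (k, s)) * z k) = (\<Sum>k<p. \<Sum>s'\<in>S. cnj (A (k, s)) * (A (k, s') * y s'))"
      by (simp add: z_def sum_distrib_left)
    also have "\<dots> = (\<Sum>s'\<in>S. gram p A s s' * y s')"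
      by (subst sum.swap) (simp add: gram_def sum_distrib_left sum_distrib_right mult_ac)
    finally show "(\<Sum>k<p. cnj (A (k, s)) * z k) = (\<Sum>s'\<in>S. gram p A s s' * y s')" .
  qed
  have "(vnorm2 {..<p} z)\<^sup>2 = re_inner S y (\<lambda>s. \<Sum>k<p. cnj (A (k, s)) * z k)"
    by (subst re_inner_adjoint) (simp only: re_inner_self[symmetric] z_def)
  also have "\<dots> = re_inner S y (\<lambda>s. \<Sum>s'\<in>S. gram p A s s' * y s')"
    by (simp only: gram_y)
  also have "\<dots> \<le> vnorm2 S y * (norm_2_2 S S (gram p A) * vnorm2 S y)"
    using re_inner_le vnorm2_mult_le_norm_2_2[OF S] vnorm2_nonneg
    by (blast intro: order_trans mult_left_mono)
  finally show ?thesis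
    by (simp add: z_def power2_eq_square mult_ac)
qed

text \<open>With \<open>b\<close> the \<open>i\<close>-th column of \<open>A\<close>, \<open>y = A\<^sub>S\<^sup>* b\<close> and \<open>z = A\<^sub>S y\<close> we have
  \<open>\<parallel>y\<parallel>\<^sup>2 = \<langle>z, b\<rangle> \<le> \<parallel>z\<parallel> \<parallel>b\<parallel>\<close> and \<open>\<parallel>z\<parallel>\<^sup>2 \<le> \<Lambda> \<parallel>y\<parallel>\<^sup>2\<close>.\<close>
lemma vnorm2_gram_column_power2_le:
  fixes A :: "nat \<times> nat \<Rightarrow> complex"
  assumes S: "finite S" and \<Lambda>: "norm_2_2 S S (gram p A) \<le> \<Lambda>" "0 \<le> \<Lambda>"
  shows "(vnorm2 S (\<lambda>s. gram p A s i))\<^sup>2 \<le> \<Lambda> * (\<Sum>k<p. (cmod (A (k, i)))\<^sup>2)"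
proof -
  define y where "y = (\<lambda>s. gram p A s i)"
  define b where "b = (\<lambda>k. A (k, i))"
  define z where "z = (\<lambda>k. \<Sum>s\<in>S. A (k, s) * y s)"
  have y: "y = (\<lambda>s. \<Sum>k<p. cnj (A (k, s)) * b k)"
    by (simp add: y_def b_def gram_def)
  have "(vnorm2 S y)\<^sup>2 = re_inner S y (\<lambda>s. \<Sum>k<p. cnj (A (k, s)) * b k)"
    by (simp only: re_inner_self[symmetric] y[symmetric])
  also have "\<dots> = re_inner {..<p} z b"
    by (simp only: re_inner_adjoint z_def)
  finally have y_le: "(vnorm2 S y)\<^sup>2 \<le> vnorm2 {..<p} z * vnorm2 {..<p} b"
    using re_inner_le by simp
  have z_le: "(vnorm2 {..<p} z)\<^sup>2 \<le> \<Lambda> * (vnorm2 S y)\<^sup>2"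
    unfolding z_def using vnorm2_mult_power2_le_norm_2_2_gram[OF S, of p A y] \<Lambda>(1)
    by (meson mult_right_mono order_trans zero_le_power2)
  have "(vnorm2 S y)\<^sup>2 \<le> \<Lambda> * (vnorm2 {..<p} b)\<^sup>2"
  proof (cases "vnorm2 S y = 0")
    case False
    have "(vnorm2 S y)\<^sup>2 * (vnorm2 S y)\<^sup>2 \<le> (vnorm2 {..<p} z)\<^sup>2 * (vnorm2 {..<p} b)\<^sup>2"
      using y_le by (metis power_mono power_mult_distrib zero_le_power2 power2_eq_square)
    also have "\<dots> \<le> (\<Lambda> * (vnorm2 {..<p} b)\<^sup>2) * (vnorm2 S y)\<^sup>2"
      using mult_right_mono[OF z_le zero_le_power2[of "vnorm2 {..<p} b"]] by (simp add: mult_ac)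
    finally show ?thesis
      by (rule mult_right_le_imp_le) (use False vnorm2_nonneg[of S y] in simp)
  qed (use \<Lambda> in simp)
  then show ?thesis
    by (simp add: y_def b_def vnorm2_power2)
qed

lemma borel_measurable_cnj [measurable]:
  "f \<in> borel_measurable M \<Longrightarrow> (\<lambda>x. cnj (f x)) \<in> borel_measurable M"
  by (rule measurable_compose[of _ _ borel]) (auto intro: borel_measurable_continuous_onI continuous_intros)

lemma borel_measurable_gram:
  assumes "j < n" "j' < n"
  shows "(\<lambda>A. gram p A j j') \<in> borel_measurable (cmat_space p n)"
  unfolding gram_def cmat_space_def
  using assms by (intro borel_measurable_sum borel_measurable_times borel_measurable_cnj measurable_component_singleton) auto

lemma row_sum_le_norm_inf_inf:
  "finite I \<Longrightarrow> i \<in> I \<Longrightarrow> (\<Sum>j\<in>J. cmod (G i j)) \<le> norm_inf_inf I J G"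
  unfolding norm_inf_inf_def by (intro Max_ge) auto

lemma ASAe_eq_sum_gram: "ASAe m p Bs i s = (\<Sum>l<m. gram (p l) (Bs l) s i) / of_nat m"
proof -
  have sqrt_m: "complex_of_real (sqrt (real m)) * complex_of_real (sqrt (real m)) = of_nat m"
    by (simp flip: of_real_mult)
  have "ASAe m p Bs i s = (\<Sum>(l, k)\<in>Sigma {..<m} (\<lambda>l. {..<p l}).
      cnj (Bs l (k, s) / complex_of_real (sqrt (real m))) * (Bs l (k, i) / complex_of_real (sqrt (real m))))"
    unfolding ASAe_def stack_rows_def stackA_def by (rule sum.cong) auto
  also have "\<dots> = (\<Sum>l<m. \<Sum>k<p l. cnj (Bs l (k, s) / complex_of_real (sqrt (real m))) *
                                         (Bs l (k, i) / complex_of_real (sqrt (real m))))"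
    by (rule sum.Sigma[symmetric]) auto
  also have "\<dots> = (\<Sum>l<m. \<Sum>k<p l. cnj (Bs l (k, s)) * Bs l (k, i) / of_nat m)"
    using sqrt_m by (simp add: field_simps)
  also have "\<dots> = (\<Sum>l<m. gram (p l) (Bs l) s i) / of_nat m"
    by (simp add: gram_def sum_divide_distrib)
  finally show ?thesis .
qed

section \<open>The tail of one column of \<open>A\<^sub>S\<^sup>* A\<close>\<close>

lemma (in prob_space) integral_vnorm2_centred_le:
  assumes int: "\<And>s. s \<in> S \<Longrightarrow> integrable M (\<lambda>\<omega>. Y \<omega> s)"
    and int2: "integrable M (\<lambda>\<omega>. (vnorm2 S (Y \<omega>))\<^sup>2)"
  shows "(\<integral>\<omega>. (vnorm2 S (\<lambda>s. Y \<omega> s - (CLINT \<omega>|M. Y \<omega> s)))\<^sup>2 \<partial>M) \<le> (\<integral>\<omega>. (vnorm2 S (Y \<omega>))\<^sup>2 \<partial>M)"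
proof -
  define \<mu> where "\<mu> = (\<lambda>s. CLINT \<omega>|M. Y \<omega> s)"
  have int_Re: "integrable M (\<lambda>\<omega>. Re (cnj (Y \<omega> s) * \<mu> s))" if "s \<in> S" for s
    using int[OF that] by (intro integrable_Re integrable_mult_left integrable_cnj)
  have int_inner: "integrable M (\<lambda>\<omega>. re_inner S (Y \<omega>) \<mu>)"
    unfolding re_inner_def using int_Re by (rule Bochner_Integration.integrable_sum)
  have "(\<integral>\<omega>. re_inner S (Y \<omega>) \<mu> \<partial>M) = (\<Sum>s\<in>S. \<integral>\<omega>. Re (cnj (Y \<omega> s) * \<mu> s) \<partial>M)"
    unfolding re_inner_def using int_Re by (rule Bochner_Integration.integral_sum)
  also have "\<dots> = (\<Sum>s\<in>S. Re (cnj (\<mu> s) * \<mu> s))"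
  proof (rule sum.cong[OF refl])
    fix s assume "s \<in> S"
    then show "(\<integral>\<omega>. Re (cnj (Y \<omega> s) * \<mu> s) \<partial>M) = Re (cnj (\<mu> s) * \<mu> s)"
      using int by (subst integral_Re) (auto simp: \<mu>_def)
  qed
  finally have mean_inner: "(\<integral>\<omega>. re_inner S (Y \<omega>) \<mu> \<partial>M) = (vnorm2 S \<mu>)\<^sup>2"
    by (simp only: re_inner_def[symmetric] re_inner_self)
  have pointwise: "(vnorm2 S (\<lambda>s. Y \<omega> s - \<mu> s))\<^sup>2
      = (vnorm2 S (Y \<omega>))\<^sup>2 + (- 2 * re_inner S (Y \<omega>) \<mu> + (vnorm2 S \<mu>)\<^sup>2)" for \<omega>
    using vnorm2_add_power2[of S "Y \<omega>" "\<lambda>s. - \<mu> s"] by (simp add: re_inner_uminus_right vnorm2_uminus)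
  have "(\<integral>\<omega>. (vnorm2 S (\<lambda>s. Y \<omega> s - \<mu> s))\<^sup>2 \<partial>M)
      = (\<integral>\<omega>. (vnorm2 S (Y \<omega>))\<^sup>2 \<partial>M) + (\<integral>\<omega>. - 2 * re_inner S (Y \<omega>) \<mu> + (vnorm2 S \<mu>)\<^sup>2 \<partial>M)"
    unfolding pointwise using int2 int_inner by (intro Bochner_Integration.integral_add) auto
  also have "(\<integral>\<omega>. - 2 * re_inner S (Y \<omega>) \<mu> + (vnorm2 S \<mu>)\<^sup>2 \<partial>M) = - (vnorm2 S \<mu>)\<^sup>2"
    using int_inner by (subst Bochner_Integration.integral_add) (auto simp: mean_inner prob_space)
  finally show ?thesis
    by (simp add: \<mu>_def)
qed

context
  fixes M :: "'a measure" and n m :: nat and p :: "nat \<Rightarrow> nat"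
    and B :: "nat \<Rightarrow> 'a \<Rightarrow> (nat \<times> nat \<Rightarrow> complex)"
    and S :: "nat set" and \<Theta> :: real and i :: nat
  assumes prob_space_M: "prob_space M"
    and indep: "prob_space.indep_vars M (\<lambda>l. cmat_space (p l) n) B {..<m}"
    and integrable_gram: "\<forall>l<m. \<forall>j<n. \<forall>j'<n. integrable M (\<lambda>\<omega>. gram (p l) (B l \<omega>) j j')"
    and isotropy: "\<forall>j<n. \<forall>j'<n.
          (1 / of_nat m) * (\<Sum>l<m. integral\<^sup>L M (\<lambda>\<omega>. gram (p l) (B l \<omega>) j j'))
            = (if j = j' then 1 else 0)"
    and S: "S \<subseteq> {..<n}" and \<Theta>: "0 < \<Theta>"
    and Theta: "AE \<omega> in M. \<forall>l<m. norm_inf_inf {..<n} S (gram (p l) (B l \<omega>)) \<le> \<Theta>"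
    and Lambda: "\<exists>\<Lambda>::real. \<Lambda> > 0 \<and>
          (AE \<omega> in M. \<forall>l<m. norm_2_2 S S (gram (p l) (B l \<omega>)) \<le> \<Lambda>) \<and> \<Theta> \<ge> \<Lambda>"
    and i: "i < n" "i \<notin> S" and m_pos: "0 < m"
begin

lemma finite_S: "finite S"
  using S finite_subset by blast

lemma measurable_B: "l < m \<Longrightarrow> B l \<in> measurable M (cmat_space (p l) n)"
  using indep unfolding prob_space.indep_vars_def2[OF prob_space_M] by auto

lemma borel_measurable_column:
  "l < m \<Longrightarrow> s \<in> S \<Longrightarrow> (\<lambda>\<omega>. gram (p l) (B l \<omega>) s i) \<in> borel_measurable M"
  using S i by (intro measurable_compose[OF measurable_B borel_measurable_gram]) auto

lemma integrable_column: "l < m \<Longrightarrow> s \<in> S \<Longrightarrow> integrable M (\<lambda>\<omega>. gram (p l) (B l \<omega>) s i)"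
  using integrable_gram S i by auto

definition column_mean :: "nat \<Rightarrow> nat \<Rightarrow> complex" where
  "column_mean l s = (CLINT \<omega>|M. gram (p l) (B l \<omega>) s i)"

definition centred_column :: "nat \<Rightarrow> (nat \<times> nat \<Rightarrow> complex) \<Rightarrow> nat \<Rightarrow> complex" where
  "centred_column l A s = (if s \<in> S then gram (p l) A s i - column_mean l s else 0)"

text \<open>Beyond the \<open>m\<close> blocks any probability measure will do; a point mass keeps
  \<open>block_distr l\<close> a probability space for every \<open>l\<close>.\<close>
definition block_distr :: "nat \<Rightarrow> (nat \<times> nat \<Rightarrow> complex) measure" where
  "block_distr l = (if l < m then distr M (cmat_space (p l) n) (B l)
                   else return (cmat_space (p l) n) (restrict (\<lambda>_. 0) ({..<p l} \<times> {..<n})))"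

lemma prob_space_block_distr: "prob_space (block_distr l)"
proof (cases "l < m")
  case True
  then show ?thesis
    unfolding block_distr_def using prob_space.prob_space_distr[OF prob_space_M measurable_B] by simp
next
  case False
  have "restrict (\<lambda>_. 0) ({..<p l} \<times> {..<n}) \<in> space (cmat_space (p l) n)"
    by (simp add: cmat_space_def space_PiM)
  then show ?thesis
    unfolding block_distr_def using False by (simp add: prob_space_return)
qed

lemma borel_measurable_centred_column:
  "(\<lambda>A. centred_column l A s) \<in> borel_measurable (cmat_space (p l) n)"
proof (cases "s \<in> S")
  case True
  then have "s < n" using S by auto
  then show ?thesis
    unfolding centred_column_def using True borel_measurable_gram[OF _ i(1), of s "p l"] by simp
qed (simp add: centred_column_def)

lemma borel_measurable_centred_column_block_distr:
  "(\<lambda>A. centred_column l A s) \<in> borel_measurable (block_distr l)"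
  using borel_measurable_centred_column measurable_cong_sets[of "block_distr l" "cmat_space (p l) n"]
  by (simp add: block_distr_def)

lemma integrable_centred_column:
  assumes "l < m" "s \<in> S"
  shows "integrable (block_distr l) (\<lambda>A. centred_column l A s)"
proof -
  interpret prob_space M by (rule prob_space_M)
  have "integrable M (\<lambda>\<omega>. centred_column l (B l \<omega>) s)"
    using integrable_column[OF assms] assms(2) by (simp add: centred_column_def)
  then show ?thesis
    using assms(1) by (simp add: block_distr_def integrable_distr_eq[OF measurable_B borel_measurable_centred_column])
qed

lemma integral_centred_column:
  assumes "l < m" "s \<in> S"
  shows "integral\<^sup>L (block_distr l) (\<lambda>A. centred_column l A s) = 0"
proof -
  interpret prob_space M by (rule prob_space_M)
  have "integral\<^sup>L (block_distr l) (\<lambda>A. centred_column l A s) = integral\<^sup>L M (\<lambda>\<omega>. centred_column l (B l \<omega>) s)"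
    using assms(1) by (simp add: block_distr_def integral_distr[OF measurable_B borel_measurable_centred_column])
  also have "\<dots> = integral\<^sup>L M (\<lambda>\<omega>. gram (p l) (B l \<omega>) s i - column_mean l s)"
    using assms(2) by (simp add: centred_column_def)
  also have "\<dots> = 0"
    using integrable_column[OF assms] by (subst Bochner_Integration.integral_diff) (auto simp: column_mean_def prob_space)
  finally show ?thesis .
qed

lemma sum_cmod_column_le:
  assumes l: "l < m"
  shows "AE \<omega> in M. (\<Sum>s\<in>S. cmod (gram (p l) (B l \<omega>) s i)) \<le> \<Theta>"
  using Theta
proof eventually_elim
  case (elim \<omega>)
  have "(\<Sum>s\<in>S. cmod (gram (p l) (B l \<omega>) s i)) = (\<Sum>s\<in>S. cmod (gram (p l) (B l \<omega>) i s))"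
    by (rule sum.cong) (simp_all add: gram_cnj[of _ _ _ i])
  also have "\<dots> \<le> norm_inf_inf {..<n} S (gram (p l) (B l \<omega>))"
    using i by (intro row_sum_le_norm_inf_inf) auto
  finally show ?case
    using elim l by auto
qed

lemma vnorm2_column_mean_le: "l < m \<Longrightarrow> vnorm2 S (column_mean l) \<le> \<Theta>"
proof -
  assume l: "l < m"
  interpret prob_space M by (rule prob_space_M)
  have "vnorm2 S (column_mean l) \<le> (\<Sum>s\<in>S. \<integral>\<omega>. cmod (gram (p l) (B l \<omega>) s i) \<partial>M)"
    unfolding column_mean_def by (intro order_trans[OF vnorm2_le_sum_cmod] sum_mono integral_norm_bound)
  also have "\<dots> = (\<integral>\<omega>. (\<Sum>s\<in>S. cmod (gram (p l) (B l \<omega>) s i)) \<partial>M)"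
    using integrable_column[OF l] by (intro Bochner_Integration.integral_sum[symmetric]) auto
  also have "\<dots> \<le> (\<integral>\<omega>. \<Theta> \<partial>M)"
    by (rule integral_mono_AE) (use integrable_column[OF l] sum_cmod_column_le[OF l] in auto)
  finally show ?thesis
    by (simp add: prob_space)
qed

lemma vnorm2_centred_column_le:
  assumes l: "l < m"
  shows "AE A in block_distr l. vnorm2 S (centred_column l A) \<le> 2 * \<Theta>"
proof -
  have [measurable]: "(\<lambda>A. vnorm2 S (centred_column l A)) \<in> borel_measurable (cmat_space (p l) n)"
    by (intro borel_measurable_vnorm2 borel_measurable_centred_column)
  have "AE \<omega> in M. vnorm2 S (centred_column l (B l \<omega>)) \<le> 2 * \<Theta>"
    using sum_cmod_column_le[OF l]
  proof eventually_elim
    case (elim \<omega>)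
    have "vnorm2 S (centred_column l (B l \<omega>)) = vnorm2 S (\<lambda>s. gram (p l) (B l \<omega>) s i + - column_mean l s)"
      by (rule vnorm2_cong) (simp add: centred_column_def)
    also have "\<dots> \<le> vnorm2 S (\<lambda>s. gram (p l) (B l \<omega>) s i) + vnorm2 S (column_mean l)"
      using vnorm2_triangle[of S "\<lambda>s. gram (p l) (B l \<omega>) s i" "\<lambda>s. - column_mean l s"]
      by (simp only: vnorm2_uminus)
    also have "\<dots> \<le> 2 * \<Theta>"
      using elim vnorm2_le_sum_cmod[of S "\<lambda>s. gram (p l) (B l \<omega>) s i"] vnorm2_column_mean_le[OF l]
      by linarith
    finally show ?case .
  qed
  moreover have "{A \<in> space (cmat_space (p l) n). vnorm2 S (centred_column l A) \<le> 2 * \<Theta>}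
      \<in> sets (cmat_space (p l) n)"
    by measurable
  ultimately show ?thesis
    unfolding block_distr_def using l AE_distr_iff[OF measurable_B] by simp
qed

lemma centred_bounded_vectors_columns:
  "centred_bounded_vectors block_distr centred_column S m (2 * \<Theta>)"
  unfolding centred_bounded_vectors_def
  using prob_space_block_distr finite_S borel_measurable_centred_column_block_distr
    integrable_centred_column integral_centred_column vnorm2_centred_column_le
  by blast

text \<open>Centring can only decrease the second moment, and the column \<open>B\<^sub>l\<^sup>* B\<^sub>l e\<^sub>i\<close>
  restricted to \<open>S\<close> has second moment at most \<open>\<Lambda> \<parallel>B\<^sub>l e\<^sub>i\<parallel>\<^sup>2\<close>.\<close>
lemma integral_vnorm2_centred_column_le:
  assumes l: "l < m" and \<Lambda>: "0 \<le> \<Lambda>" "AE \<omega> in M. \<forall>l<m. norm_2_2 S S (gram (p l) (B l \<omega>)) \<le> \<Lambda>"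
  shows "(\<integral>A. (vnorm2 S (centred_column l A))\<^sup>2 \<partial>block_distr l) \<le> \<Lambda> * Re (CLINT \<omega>|M. gram (p l) (B l \<omega>) i i)"
proof -
  interpret prob_space M by (rule prob_space_M)
  define Y where "Y = (\<lambda>\<omega> s. gram (p l) (B l \<omega>) s i)"
  define g where "g = (\<lambda>\<omega>. \<Sum>k<p l. (cmod (B l \<omega> (k, i)))\<^sup>2)"
  have [measurable]: "(\<lambda>A. vnorm2 S (centred_column l A)) \<in> borel_measurable (cmat_space (p l) n)"
    by (intro borel_measurable_vnorm2 borel_measurable_centred_column)
  have Y_meas: "(\<lambda>\<omega>. vnorm2 S (Y \<omega>)) \<in> borel_measurable M"
    unfolding Y_def using borel_measurable_column[OF l] by (rule borel_measurable_vnorm2_on)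
  have int_Y2: "integrable M (\<lambda>\<omega>. (vnorm2 S (Y \<omega>))\<^sup>2)"
  proof (rule integrable_const_bound[where B="\<Theta>\<^sup>2"])
    show "AE \<omega> in M. norm ((vnorm2 S (Y \<omega>))\<^sup>2) \<le> \<Theta>\<^sup>2"
      using sum_cmod_column_le[OF l]
      by eventually_elim (auto simp: Y_def vnorm2_nonneg intro!: power_mono order_trans[OF vnorm2_le_sum_cmod])
  qed (use Y_meas in measurable)
  have "integrable M (\<lambda>\<omega>. Re (gram (p l) (B l \<omega>) i i))"
    using integrable_gram l i by auto
  then have int_g: "integrable M g"
    by (simp add: g_def gram_diag)
  have "(\<integral>A. (vnorm2 S (centred_column l A))\<^sup>2 \<partial>block_distr l) = (\<integral>\<omega>. (vnorm2 S (centred_column l (B l \<omega>)))\<^sup>2 \<partial>M)"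
    unfolding block_distr_def using l by (simp add: integral_distr[OF measurable_B])
  also have "\<dots> = (\<integral>\<omega>. (vnorm2 S (\<lambda>s. Y \<omega> s - (CLINT \<omega>|M. Y \<omega> s)))\<^sup>2 \<partial>M)"
    by (intro Bochner_Integration.integral_cong refl arg_cong[where f="\<lambda>x. x\<^sup>2"] vnorm2_cong)
       (simp add: centred_column_def column_mean_def Y_def)
  also have "\<dots> \<le> (\<integral>\<omega>. (vnorm2 S (Y \<omega>))\<^sup>2 \<partial>M)"
    using integrable_column[OF l] int_Y2 by (intro integral_vnorm2_centred_le) (auto simp: Y_def)
  also have "\<dots> \<le> (\<integral>\<omega>. \<Lambda> * g \<omega> \<partial>M)"
  proof (rule integral_mono_AE')
    show "AE \<omega> in M. (vnorm2 S (Y \<omega>))\<^sup>2 \<le> \<Lambda> * g \<omega>"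
      using \<Lambda>(2) by eventually_elim (use l vnorm2_gram_column_power2_le[OF finite_S _ \<Lambda>(1)] in \<open>auto simp: Y_def g_def\<close>)
  qed (use int_g \<Lambda> in \<open>auto simp: g_def intro!: AE_I2 mult_nonneg_nonneg sum_nonneg\<close>)
  also have "\<dots> = \<Lambda> * Re (CLINT \<omega>|M. gram (p l) (B l \<omega>) i i)"
  proof -
    have "(\<lambda>\<omega>. gram (p l) (B l \<omega>) i i) = (\<lambda>\<omega>. complex_of_real (g \<omega>))"
      by (simp only: gram_diag g_def)
    then have "(CLINT \<omega>|M. gram (p l) (B l \<omega>) i i) = complex_of_real (\<integral>\<omega>. g \<omega> \<partial>M)"
      by (simp only: integral_complex_of_real)
    then show ?thesis
      by simp
  qed
  finally show ?thesis .
qed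

lemma sum_integral_vnorm2_centred_column_le:
  "(\<Sum>l<m. \<integral>A. (vnorm2 S (centred_column l A))\<^sup>2 \<partial>block_distr l) \<le> real m * \<Theta>"
proof -
  obtain \<Lambda> where \<Lambda>: "0 < \<Lambda>" "AE \<omega> in M. \<forall>l<m. norm_2_2 S S (gram (p l) (B l \<omega>)) \<le> \<Lambda>" "\<Lambda> \<le> \<Theta>"
    using Lambda by blast
  have "(\<Sum>l<m. \<integral>A. (vnorm2 S (centred_column l A))\<^sup>2 \<partial>block_distr l)
      \<le> (\<Sum>l<m. \<Lambda> * Re (CLINT \<omega>|M. gram (p l) (B l \<omega>) i i))"
    by (intro sum_mono integral_vnorm2_centred_column_le) (use \<Lambda> in auto)
  also have "\<dots> = \<Lambda> * Re (\<Sum>l<m. CLINT \<omega>|M. gram (p l) (B l \<omega>) i i)"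
    by (simp add: sum_distrib_left Re_sum)
  also have "(\<Sum>l<m. CLINT \<omega>|M. gram (p l) (B l \<omega>) i i) = of_nat m"
    using isotropy i m_pos by (auto simp: field_simps)
  also have "\<Lambda> * Re (of_nat m) \<le> \<Theta> * real m"
    using \<Lambda> by (simp add: mult_right_mono)
  finally show ?thesis
    by (simp add: mult.commute)
qed

text \<open>Since \<open>i \<notin> S\<close>, isotropy makes the column means sum to zero.\<close>
lemma vnorm2_sum_centred_column:
  "vnorm2 S (\<lambda>s. \<Sum>l<m. centred_column l (B l \<omega>) s) = real m * vnorm2 S (ASAe m p (\<lambda>l. B l \<omega>) i)"
proof -
  have "(\<Sum>l<m. centred_column l (B l \<omega>) s) = of_nat m * ASAe m p (\<lambda>l. B l \<omega>) i s" if s: "s \<in> S" for s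
  proof -
    have "s < n" "s \<noteq> i"
      using s S i by auto
    then have "(1 / of_nat m) * (\<Sum>l<m. column_mean l s) = 0"
      using isotropy i by (simp add: column_mean_def)
    then have "(\<Sum>l<m. column_mean l s) = 0"
      using m_pos by simp
    then show ?thesis
      using s m_pos by (simp add: centred_column_def sum_subtractf ASAe_eq_sum_gram)
  qed
  then have "vnorm2 S (\<lambda>s. \<Sum>l<m. centred_column l (B l \<omega>) s) = vnorm2 S (\<lambda>s. of_nat m * ASAe m p (\<lambda>l. B l \<omega>) i s)"
    by (rule vnorm2_cong)
  then show ?thesis
    by (simp only: vnorm2_mult norm_of_nat)
qed

lemma nn_integral_transfer_PiM_block_distr:
  assumes [measurable]: "h \<in> borel_measurable borel"
  shows "(\<integral>\<^sup>+ \<omega>. ennreal (h (vnorm2 S (\<lambda>s. \<Sum>l<m. centred_column l (B l \<omega>) s))) \<partial>M)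
       = (\<integral>\<^sup>+ x. ennreal (h (vnorm2 S (\<lambda>s. \<Sum>l<m. centred_column l (x l) s))) \<partial>PiM {..<m} block_distr)"
proof -
  have B_PiM [measurable]: "(\<lambda>\<omega>. \<lambda>l\<in>{..<m}. B l \<omega>) \<in> measurable M (PiM {..<m} (\<lambda>l. cmat_space (p l) n))"
    by (rule measurable_restrict) (use measurable_B in auto)
  have "(\<lambda>x. vnorm2 S (\<lambda>s. \<Sum>l<m. centred_column l (x l) s)) \<in> borel_measurable (PiM {..<m} (\<lambda>l. cmat_space (p l) n))"
    by (rule borel_measurable_vnorm2_PiM_sum[OF borel_measurable_centred_column]) simp
  then have F_meas: "(\<lambda>x. ennreal (h (vnorm2 S (\<lambda>s. \<Sum>l<m. centred_column l (x l) s))))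
      \<in> borel_measurable (PiM {..<m} (\<lambda>l. cmat_space (p l) n))"
    by measurable
  have nonempty: "{..<m} \<noteq> {}"
    using m_pos by auto
  have "distr M (PiM {..<m} (\<lambda>l. cmat_space (p l) n)) (\<lambda>\<omega>. \<lambda>l\<in>{..<m}. B l \<omega>)
      = PiM {..<m} (\<lambda>l. distr M (cmat_space (p l) n) (B l))"
    using prob_space.indep_vars_iff_distr_eq_PiM'[OF prob_space_M nonempty measurable_B] indep by auto
  also have "\<dots> = PiM {..<m} block_distr"
    by (rule PiM_cong) (auto simp: block_distr_def)
  finally have "(\<integral>\<^sup>+ x. ennreal (h (vnorm2 S (\<lambda>s. \<Sum>l<m. centred_column l (x l) s))) \<partial>PiM {..<m} block_distr)
      = (\<integral>\<^sup>+ x. ennreal (h (vnorm2 S (\<lambda>s. \<Sum>l<m. centred_column l (x l) s)))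
          \<partial>distr M (PiM {..<m} (\<lambda>l. cmat_space (p l) n)) (\<lambda>\<omega>. \<lambda>l\<in>{..<m}. B l \<omega>))"
    by simp
  also have "\<dots> = (\<integral>\<^sup>+ \<omega>. ennreal (h (vnorm2 S (\<lambda>s. \<Sum>l<m. centred_column l ((\<lambda>l\<in>{..<m}. B l \<omega>) l) s))) \<partial>M)"
    by (rule nn_integral_distr[OF B_PiM]) (use F_meas in simp)
  also have "\<dots> = (\<integral>\<^sup>+ \<omega>. ennreal (h (vnorm2 S (\<lambda>s. \<Sum>l<m. centred_column l (B l \<omega>) s))) \<partial>M)"
    by (intro nn_integral_cong arg_cong[where f="\<lambda>x. ennreal (h (vnorm2 S x))"] ext sum.cong) auto
  finally show ?thesis ..
qed

lemma borel_measurable_vnorm2_sum_centred_column [measurable]: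
  "(\<lambda>\<omega>. vnorm2 S (\<lambda>s. \<Sum>l<m. centred_column l (B l \<omega>) s)) \<in> borel_measurable M"
proof (intro borel_measurable_vnorm2 borel_measurable_sum)
  fix l s assume "l \<in> {..<m}"
  then show "(\<lambda>\<omega>. centred_column l (B l \<omega>) s) \<in> borel_measurable M"
    using measurable_compose[OF measurable_B borel_measurable_centred_column] by auto
qed

lemma borel_measurable_vnorm2_ASAe [measurable]:
  "(\<lambda>\<omega>. vnorm2 S (ASAe m p (\<lambda>l. B l \<omega>) i)) \<in> borel_measurable M"
proof -
  have "(\<lambda>\<omega>. vnorm2 S (\<lambda>s. \<Sum>l<m. centred_column l (B l \<omega>) s) / real m) \<in> borel_measurable M"
    by measurable
  then show ?thesis
    using m_pos by (simp add: vnorm2_sum_centred_column)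
qed

lemma prob_sum_centred_column_ge_Chebyshev:
  assumes R: "0 < R"
  shows "measure M {\<omega> \<in> space M. R \<le> vnorm2 S (\<lambda>s. \<Sum>l<m. centred_column l (B l \<omega>) s)}
           \<le> real m * \<Theta> / R\<^sup>2"
proof (rule measure_ge_le_Markov_mono[OF prob_space_M, where h="\<lambda>x. x\<^sup>2"])
  interpret centred_bounded_vectors block_distr centred_column S m "2 * \<Theta>"
    by (rule centred_bounded_vectors_columns)
  show "(\<integral>\<^sup>+ \<omega>. ennreal ((vnorm2 S (\<lambda>s. \<Sum>l<m. centred_column l (B l \<omega>) s))\<^sup>2) \<partial>M)
      \<le> ennreal (real m * \<Theta>)"
    using nn_integral_vnorm2_sum_power2_le sum_integral_vnorm2_centred_column_le
      nn_integral_transfer_PiM_block_distr[of "\<lambda>x. x\<^sup>2"]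
    by (auto intro: order_trans ennreal_leI)
qed (use R \<Theta> in \<open>auto intro: power_mono\<close>)

lemma prob_sum_centred_column_ge_Bernstein:
  assumes R: "0 \<le> R" and lam: "0 \<le> lam" "lam * (2 * \<Theta>) < 3"
  shows "measure M {\<omega> \<in> space M. R \<le> vnorm2 S (\<lambda>s. \<Sum>l<m. centred_column l (B l \<omega>) s)}
           \<le> 2 * exp (lam\<^sup>2 * (real m * \<Theta>) / (2 * (1 - lam * (2 * \<Theta>) / 3)) - lam * R)"
proof -
  interpret centred_bounded_vectors block_distr centred_column S m "2 * \<Theta>"
    by (rule centred_bounded_vectors_columns)
  have "lam\<^sup>2 * (\<Sum>l<m. \<integral>A. (vnorm2 S (centred_column l A))\<^sup>2 \<partial>block_distr l) / (2 * (1 - lam * (2 * \<Theta>) / 3))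
      \<le> lam\<^sup>2 * (real m * \<Theta>) / (2 * (1 - lam * (2 * \<Theta>) / 3))"
    using sum_integral_vnorm2_centred_column_le lam
    by (intro divide_right_mono mult_left_mono) (auto simp: mult_ac)
  then have "(\<integral>\<^sup>+ \<omega>. ennreal (cosh (lam * vnorm2 S (\<lambda>s. \<Sum>l<m. centred_column l (B l \<omega>) s))) \<partial>M)
      \<le> ennreal (exp (lam\<^sup>2 * (real m * \<Theta>) / (2 * (1 - lam * (2 * \<Theta>) / 3))))"
    using nn_integral_cosh_vnorm2_sum_le[OF _ lam] \<Theta>
      nn_integral_transfer_PiM_block_distr[of "\<lambda>x. cosh (lam * x)"]
    by (auto intro: order_trans ennreal_leI)
  then have "measure M {\<omega> \<in> space M. R \<le> vnorm2 S (\<lambda>s. \<Sum>l<m. centred_column l (B l \<omega>) s)}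
      \<le> exp (lam\<^sup>2 * (real m * \<Theta>) / (2 * (1 - lam * (2 * \<Theta>) / 3))) / cosh (lam * R)"
    using R lam by (intro measure_ge_le_Markov_mono[OF prob_space_M, where h="\<lambda>x. cosh (lam * x)"])
      (auto simp: cosh_real_nonneg_le_iff mult_left_mono)
  also have "\<dots> \<le> 2 * exp (lam\<^sup>2 * (real m * \<Theta>) / (2 * (1 - lam * (2 * \<Theta>) / 3)) - lam * R)"
  proof -
    have "exp (lam * R) \<le> 2 * cosh (lam * R)"
      by (simp add: cosh_def)
    then show ?thesis
      by (simp add: exp_diff field_simps)
  qed
  finally show ?thesis .
qed

lemma column_tail_bound:
  fixes t :: real
  assumes t: "0 < t"
  shows "measure M {\<omega> \<in> space M. sqrt (\<Theta> / m) + t \<le> vnorm2 S (ASAe m p (\<lambda>l. B l \<omega>) i)}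
           \<le> exp (- ((m * t\<^sup>2 / 2) / (\<Theta> * (1 + 4 * sqrt (\<Theta> / m) + 2 * t / 3))))"
proof -
  define a where "a = sqrt (\<Theta> / m)"
  define D where "D = \<Theta> * (1 + 4 * a + 2 * t / 3)"
  define lam where "lam = t / D"
  define R where "R = real m * (a + t)"
  have a: "0 < a" using \<Theta> m_pos by (simp add: a_def)
  have D: "0 < D" using \<Theta> a t by (simp add: D_def)
  have "t * (2 * \<Theta>) < 3 * D"
    using \<Theta> a t by (simp add: D_def algebra_simps add_pos_pos)
  then have lam: "0 \<le> lam" "lam * (2 * \<Theta>) < 3"
    using t D by (simp_all add: lam_def field_simps)
  have R: "0 < R" using m_pos a t by (simp add: R_def)
  have "{\<omega> \<in> space M. sqrt (\<Theta> / m) + t \<le> vnorm2 S (ASAe m p (\<lambda>l. B l \<omega>) i)}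
      = {\<omega> \<in> space M. R \<le> vnorm2 S (\<lambda>s. \<Sum>l<m. centred_column l (B l \<omega>) s)}"
    using m_pos by (auto simp: vnorm2_sum_centred_column R_def a_def)
  then show ?thesis
    using Bernstein_Chebyshev_tail_le[OF \<Theta> _ t] m_pos
      prob_sum_centred_column_ge_Chebyshev[OF R] prob_sum_centred_column_ge_Bernstein[OF less_imp_le[OF R] lam]
    by (simp add: a_def D_def lam_def R_def)
qed

end

section \<open>The union bound\<close>

theorem mainTheorem18:
  fixes M :: "'a measure"
    and n m :: nat
    and p :: "nat \<Rightarrow> nat"
    and B :: "nat \<Rightarrow> 'a \<Rightarrow> (nat \<times> nat \<Rightarrow> complex)"
    and S :: "nat set"
    and \<Theta> t :: real
  assumes "prob_space M"
    and "n \<ge> 1" and "m \<ge> 1"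
    and "\<forall>l<m. p l \<ge> 1"
    and indep: "prob_space.indep_vars M (\<lambda>l. cmat_space (p l) n) B {..<m}"
    and integr: "\<forall>l<m. \<forall>j<n. \<forall>j'<n.
                   integrable M (\<lambda>\<omega>. gram (p l) (B l \<omega>) j j')"
    and isotropy: "\<forall>j<n. \<forall>j'<n.
          (1 / of_nat m) * (\<Sum>l<m. integral\<^sup>L M (\<lambda>\<omega>. gram (p l) (B l \<omega>) j j'))
            = (if j = j' then 1 else 0)"
    and "S \<subseteq> {..<n}"
    and "\<Theta> > 0"
    and Theta: "AE \<omega> in M. \<forall>l<m. norm_inf_inf {..<n} S (gram (p l) (B l \<omega>)) \<le> \<Theta>"
    and Lambda: "\<exists>\<Lambda>::real. \<Lambda> > 0 \<and>
          (AE \<omega> in M. \<forall>l<m. norm_2_2 S S (gram (p l) (B l \<omega>)) \<le> \<Lambda>) \<and> \<Theta> \<ge> \<Lambda>"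
    and "t > 0"
  shows "measure M {\<omega> \<in> space M. \<exists>i\<in>{..<n} - S.
            vnorm2 S (ASAe m p (\<lambda>l. B l \<omega>) i) \<ge> sqrt (\<Theta> / m) + t}
         \<le> n * exp (- ((m * t\<^sup>2 / 2) / (\<Theta> * (1 + 4 * sqrt (\<Theta> / m) + 2 * t / 3))))"
proof -
  interpret prob_space M by fact
  define bound where "bound = exp (- ((m * t\<^sup>2 / 2) / (\<Theta> * (1 + 4 * sqrt (\<Theta> / m) + 2 * t / 3))))"
  define E where "E = (\<lambda>i. {\<omega> \<in> space M. sqrt (\<Theta> / m) + t \<le> vnorm2 S (ASAe m p (\<lambda>l. B l \<omega>) i)})"
  have column: "E i \<in> sets M" "measure M (E i) \<le> bound" if "i \<in> {..<n} - S" for i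
  proof -
    have [measurable]: "(\<lambda>\<omega>. vnorm2 S (ASAe m p (\<lambda>l. B l \<omega>) i)) \<in> borel_measurable M"
      by (rule borel_measurable_vnorm2_ASAe) (use assms that in auto)
    show "E i \<in> sets M"
      unfolding E_def by measurable
    show "measure M (E i) \<le> bound"
      unfolding E_def bound_def by (rule column_tail_bound) (use assms that in auto)
  qed
  have "{\<omega> \<in> space M. \<exists>i\<in>{..<n} - S. vnorm2 S (ASAe m p (\<lambda>l. B l \<omega>) i) \<ge> sqrt (\<Theta> / m) + t}
      = (\<Union>i\<in>{..<n} - S. E i)"
    by (auto simp: E_def)
  then have "measure M {\<omega> \<in> space M. \<exists>i\<in>{..<n} - S. vnorm2 S (ASAe m p (\<lambda>l. B l \<omega>) i) \<ge> sqrt (\<Theta> / m) + t}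
      \<le> (\<Sum>i\<in>{..<n} - S. measure M (E i))"
    using column(1) by (simp add: finite_measure_subadditive_finite image_subset_iff)
  also have "\<dots> \<le> real (card ({..<n} - S)) * bound"
    using column(2) sum_bounded_above[of "{..<n} - S" "\<lambda>i. measure M (E i)" bound] by simp
  also have "\<dots> \<le> n * bound"
    using card_mono[of "{..<n}" "{..<n} - S"] by (intro mult_right_mono) (auto simp: bound_def)
  finally show ?thesis
    by (simp add: bound_def)
qed

end
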